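(* For every $q\ge2$, $\beta>0$ and every finite $d$-dimensional cube $V\subset\mathbb{Z}^d$, the Swendsen–Wang dynamics and the isolated vertices dynamics on the induced subgraph $G=(V,E)$ satisfy $\lambda(\boldsymbol{SW})\ge\lambda(\boldsymbol{I}_{\rm SW})$.
   Context: Potts measure with free boundary: $\pi(\sigma)\propto\exp(\beta\,\#\{(u,v)\in E:\sigma(u)=\sigma(v)\})$ on $\{1,\dots,q\}^V$; $p=1-e^{-\beta}$. Swendsen–Wang dynamics $\boldsymbol{SW}$: from $\sigma_t$, include each edge $(u,v)\in E$ with $\sigma_t(u)=\sigma_t(v)$ independently with probability $p$ to get $A_t\subseteq E$; assign each connected component of $(V,A_t)$ an independent uniform spin; discard edges. Isolated vertices dynamics $\boldsymbol{I}_{\rm SW}$: same first step, then assign an independent uniform spin only to each isolated vertex of $(V,A_t)$ (a vertex with no incident edge in $A_t$), leaving all other spins unchanged; discard edges. $\lambda(P)=1-\max\{|\lambda_2|,|\lambda_N|\}$ for a transition matrix reversible w.r.t. $\pi$ with eigenvalues $1=\lambda_1\ge\dots\ge\lambda_N$. *)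

theory Defs
  imports "Jordan_Normal_Form.Char_Poly" "HOL-Library.Multiset"
begin

text \<open>Vertices of Z^d are int lists of length d. The cube with lower corner a
  and side length L (L vertices per side).\<close>
definition cube :: "nat \<Rightarrow> (nat \<Rightarrow> int) \<Rightarrow> nat \<Rightarrow> int list set" where
  "cube d a L = {x. length x = d \<and> (\<forall>i<d. a i \<le> x ! i \<and> x ! i < a i + int L)}"

definition zd_adj :: "nat \<Rightarrow> int list \<Rightarrow> int list \<Rightarrow> bool" where
  "zd_adj d u v \<longleftrightarrow> (\<Sum>i<d. \<bar>u ! i - v ! i\<bar>) = 1"

definition induced_edges :: "nat \<Rightarrow> int list set \<Rightarrow> int list set set" where
  "induced_edges d V = {{u, v} | u v. u \<in> V \<and> v \<in> V \<and> zd_adj d u v}"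

definition configs :: "nat \<Rightarrow> 'v set \<Rightarrow> ('v \<Rightarrow> nat) set" where
  "configs q V = {\<sigma>. (\<forall>v\<in>V. \<sigma> v \<in> {1..q}) \<and> (\<forall>v. v \<notin> V \<longrightarrow> \<sigma> v = 0)}"

definition mono_edges :: "'v set set \<Rightarrow> ('v \<Rightarrow> nat) \<Rightarrow> 'v set set" where
  "mono_edges E \<sigma> = {e \<in> E. \<exists>u v. e = {u, v} \<and> \<sigma> u = \<sigma> v}"

definition perc_prob :: "real \<Rightarrow> 'v set set \<Rightarrow> 'v set set \<Rightarrow> real" where
  "perc_prob p F A = p ^ card A * (1 - p) ^ (card F - card A)"

definition edge_rel :: "'v set set \<Rightarrow> ('v \<times> 'v) set" where
  "edge_rel A = {(u, v). {u, v} \<in> A}"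

definition comp_rel :: "'v set \<Rightarrow> 'v set set \<Rightarrow> ('v \<times> 'v) set" where
  "comp_rel V A = {(u, v). u \<in> V \<and> v \<in> V \<and> (u, v) \<in> (edge_rel A)\<^sup>*}"

definition isolated :: "'v set \<Rightarrow> 'v set set \<Rightarrow> 'v \<Rightarrow> bool" where
  "isolated V A v \<longleftrightarrow> v \<in> V \<and> (\<forall>e\<in>A. v \<notin> e)"

definition SW_kernel :: "nat \<Rightarrow> real \<Rightarrow> 'v set \<Rightarrow> 'v set set \<Rightarrow> ('v \<Rightarrow> nat) \<Rightarrow> ('v \<Rightarrow> nat) \<Rightarrow> real" where
  "SW_kernel q p V E \<sigma> \<tau> =
     (\<Sum>A\<in>Pow (mono_edges E \<sigma>). perc_prob p (mono_edges E \<sigma>) A *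
        (if \<tau> \<in> configs q V \<and> (\<forall>(u, v)\<in>comp_rel V A. \<tau> u = \<tau> v)
         then 1 / real q ^ card (V // comp_rel V A) else 0))"

definition ISW_kernel :: "nat \<Rightarrow> real \<Rightarrow> 'v set \<Rightarrow> 'v set set \<Rightarrow> ('v \<Rightarrow> nat) \<Rightarrow> ('v \<Rightarrow> nat) \<Rightarrow> real" where
  "ISW_kernel q p V E \<sigma> \<tau> =
     (\<Sum>A\<in>Pow (mono_edges E \<sigma>). perc_prob p (mono_edges E \<sigma>) A *
        (if \<tau> \<in> configs q V \<and> (\<forall>v\<in>V. \<not> isolated V A v \<longrightarrow> \<tau> v = \<sigma> v)
         then 1 / real q ^ card {v \<in> V. isolated V A v} else 0))"

text \<open>Transition matrix of a kernel on a finite state space \<Omega>, w.r.t. an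
  (arbitrary) enumeration of \<Omega>; the spectrum does not depend on the choice.\<close>
definition state_enum :: "'s set \<Rightarrow> nat \<Rightarrow> 's" where
  "state_enum \<Omega> = (SOME f. bij_betw f {0..<card \<Omega>} \<Omega>)"

definition trans_mat :: "'s set \<Rightarrow> ('s \<Rightarrow> 's \<Rightarrow> real) \<Rightarrow> real mat" where
  "trans_mat \<Omega> P = mat (card \<Omega>) (card \<Omega>)
     (\<lambda>(i, j). P (state_enum \<Omega> i) (state_enum \<Omega> j))"

text \<open>Eigenvalues with multiplicity in non-increasing order
  1 = lambda_1 \<ge> ... \<ge> lambda_N (real spectrum of a reversible matrix).\<close>
definition eigs_desc :: "real mat \<Rightarrow> real list" where
  "eigs_desc M = rev (sorted_list_of_multiset (proots (char_poly M)))"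

definition spectral_gap :: "real mat \<Rightarrow> real" where
  "spectral_gap M = 1 - max \<bar>eigs_desc M ! 1\<bar> \<bar>last (eigs_desc M)\<bar>"

end

theory Submission
  imports Defs "HOL-Combinatorics.Permutations"
begin

text \<open>Both chains are reversible with respect to the Potts measure \<open>\<pi>\<close>, and both have a
  positive semidefinite quadratic form \<open>\<langle>f, P f\<rangle>\<^sub>\<pi>\<close>; so their spectral gaps are \<open>1 - \<lambda>\<^sub>2\<close>,
  and by the min-max principle it suffices to show \<open>\<langle>f, SW f\<rangle>\<^sub>\<pi> \<le> \<langle>f, I f\<rangle>\<^sub>\<pi>\<close> for all \<open>f\<close>.
  Through the Edwards--Sokal coupling both forms split into a sum over edge sets \<open>A \<subseteq> E\<close>
  with Bernoulli weights. For \<open>SW\<close> the term of \<open>A\<close> is \<open>q\<^sup>-\<^sup>c\<^sup>(\<^sup>A\<^sup>) (\<Sum>\<^sub>\<sigma> f \<sigma>)\<^sup>2\<close>, summed over the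
  configurations compatible with \<open>A\<close>; for \<open>I\<^sub>S\<^sub>W\<close> it is \<open>q\<^sup>-\<^sup>i\<^sup>(\<^sup>A\<^sup>)\<close> times the sum of \<open>f \<sigma> f \<tau>\<close> over
  compatible pairs that agree off the isolated vertices. The agreement classes all have \<open>q\<^sup>i\<^sup>(\<^sup>A\<^sup>)\<close>
  elements and there are at most \<open>q\<^sup>c\<^sup>(\<^sup>A\<^sup>)\<close> compatible configurations, so Cauchy--Schwarz over
  the classes compares the two terms.\<close>

section \<open>Spectral theorem for real symmetric matrices\<close>

text \<open>An \<open>n \<times> n\<close> matrix is a function \<open>nat \<Rightarrow> nat \<Rightarrow> real\<close> of which only indices below \<open>n\<close> matter;
  a family of vectors is given by its rows \<open>u k\<close>.\<close>

definition mat_vec :: "nat \<Rightarrow> (nat \<Rightarrow> nat \<Rightarrow> real) \<Rightarrow> (nat \<Rightarrow> real) \<Rightarrow> nat \<Rightarrow> real" where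
  "mat_vec n A x = (\<lambda>i. \<Sum>j<n. A i j * x j)"

definition mat_prod :: "nat \<Rightarrow> (nat \<Rightarrow> nat \<Rightarrow> real) \<Rightarrow> (nat \<Rightarrow> nat \<Rightarrow> real) \<Rightarrow> nat \<Rightarrow> nat \<Rightarrow> real" where
  "mat_prod n A B = (\<lambda>i k. \<Sum>j<n. A i j * B j k)"

definition sym_matrix :: "nat \<Rightarrow> (nat \<Rightarrow> nat \<Rightarrow> real) \<Rightarrow> bool" where
  "sym_matrix n S \<longleftrightarrow> (\<forall>i<n. \<forall>j<n. S i j = S j i)"

definition involution :: "nat \<Rightarrow> (nat \<Rightarrow> nat \<Rightarrow> real) \<Rightarrow> bool" where
  "involution n H \<longleftrightarrow> (\<forall>i<n. \<forall>j<n. mat_prod n H H i j = (if i = j then 1 else 0))"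

definition orthonormal_rows :: "nat \<Rightarrow> (nat \<Rightarrow> nat \<Rightarrow> real) \<Rightarrow> bool" where
  "orthonormal_rows n u \<longleftrightarrow> (\<forall>k<n. \<forall>l<n. (\<Sum>i<n. u k i * u l i) = (if k = l then 1 else 0))"

definition orthonormal_cols :: "nat \<Rightarrow> (nat \<Rightarrow> nat \<Rightarrow> real) \<Rightarrow> bool" where
  "orthonormal_cols n u \<longleftrightarrow> (\<forall>i<n. \<forall>j<n. (\<Sum>k<n. u k i * u k j) = (if i = j then 1 else 0))"

definition eigensystem :: "nat \<Rightarrow> (nat \<Rightarrow> nat \<Rightarrow> real) \<Rightarrow> (nat \<Rightarrow> real) \<Rightarrow> (nat \<Rightarrow> nat \<Rightarrow> real) \<Rightarrow> bool" where
  "eigensystem n S e u \<longleftrightarrow> (\<forall>k<n. \<forall>i<n. mat_vec n S (u k) i = e k * u k i)"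

definition quad_form :: "nat \<Rightarrow> (nat \<Rightarrow> nat \<Rightarrow> real) \<Rightarrow> (nat \<Rightarrow> real) \<Rightarrow> real" where
  "quad_form n S x = (\<Sum>i<n. \<Sum>j<n. x i * S i j * x j)"

lemma mat_vec_cong: "(\<And>j. j < n \<Longrightarrow> x j = y j) \<Longrightarrow> mat_vec n A x = mat_vec n A y"
  unfolding mat_vec_def by (auto intro!: ext sum.cong)

lemma mat_vec_scale: "mat_vec n A (\<lambda>j. c * x j) = (\<lambda>i. c * mat_vec n A x i)"
  unfolding mat_vec_def by (auto simp: sum_distrib_left algebra_simps intro!: ext)

lemma mat_vec_mat_vec: "mat_vec n A (mat_vec n B x) = mat_vec n (mat_prod n A B) x"
proof (rule ext)
  fix i
  have "mat_vec n A (mat_vec n B x) i = (\<Sum>j<n. \<Sum>k<n. A i j * B j k * x k)"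
    unfolding mat_vec_def by (simp add: sum_distrib_left mult.assoc)
  also have "\<dots> = (\<Sum>k<n. \<Sum>j<n. A i j * B j k * x k)" by (rule sum.swap)
  also have "\<dots> = mat_vec n (mat_prod n A B) x i"
    unfolding mat_vec_def mat_prod_def by (simp add: sum_distrib_right)
  finally show "mat_vec n A (mat_vec n B x) i = mat_vec n (mat_prod n A B) x i" .
qed

lemma sum_delta_mult_delta:
  "(\<Sum>k<(n::nat). (if i = k then 1 else 0) * (if k = j then 1 else (0::real))) = (if i = j \<and> i < n then 1 else 0)"
proof -
  have "(\<Sum>k<n. (if i = k then 1 else 0) * (if k = j then 1 else (0::real)))
      = (\<Sum>k<n. if k = i then (if i = j then 1 else 0) else 0)"
    by (intro sum.cong) auto
  also have "\<dots> = (if i = j \<and> i < n then 1 else 0)" by (simp add: sum.delta)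
  finally show ?thesis .
qed

lemma quad_form_mat_vec: "quad_form n S x = (\<Sum>i<n. x i * mat_vec n S x i)"
  unfolding quad_form_def mat_vec_def by (simp add: sum_distrib_left mult.assoc)

lemma involution_mat_vec_twice:
  assumes "involution n H" "i < n"
  shows "mat_vec n H (mat_vec n H x) i = x i"
proof -
  have "mat_vec n H (mat_vec n H x) i = (\<Sum>j<n. mat_prod n H H i j * x j)"
    unfolding mat_vec_mat_vec by (simp add: mat_vec_def)
  also have "\<dots> = (\<Sum>j<n. if j = i then x j else 0)"
    using assms unfolding involution_def by (intro sum.cong) auto
  also have "\<dots> = x i" using assms(2) by (simp add: sum.delta)
  finally show ?thesis .
qed

lemma sym_involution_inner:
  assumes "sym_matrix n H" "involution n H"
  shows "(\<Sum>i<n. mat_vec n H y i * mat_vec n H z i) = (\<Sum>i<n. y i * z i)"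
proof -
  have "(\<Sum>i<n. mat_vec n H y i * mat_vec n H z i) = (\<Sum>i<n. \<Sum>a<n. y a * (H a i * mat_vec n H z i))"
  proof (rule sum.cong[OF refl])
    fix i assume i: "i \<in> {..<n}"
    have "mat_vec n H y i * mat_vec n H z i = (\<Sum>a<n. H i a * y a * mat_vec n H z i)"
      unfolding mat_vec_def[of n H y] by (simp add: sum_distrib_right)
    also have "\<dots> = (\<Sum>a<n. y a * (H a i * mat_vec n H z i))"
      using assms(1) i unfolding sym_matrix_def by (intro sum.cong refl) auto
    finally show "mat_vec n H y i * mat_vec n H z i = (\<Sum>a<n. y a * (H a i * mat_vec n H z i))" .
  qed
  also have "\<dots> = (\<Sum>a<n. y a * mat_vec n H (mat_vec n H z) a)"
    by (subst sum.swap) (simp add: mat_vec_def[of n H "mat_vec n H z"] sum_distrib_left)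
  also have "\<dots> = (\<Sum>a<n. y a * z a)"
    using involution_mat_vec_twice[OF assms(2)] by (intro sum.cong) auto
  finally show ?thesis .
qed

lemma sym_matrix_complex_eigenvalue_real:
  assumes S: "sym_matrix n S" and w: "\<exists>i<n. w i \<noteq> 0"
    and eq: "\<And>i. i < n \<Longrightarrow> (\<Sum>j<n. complex_of_real (S i j) * w j) = c * w i"
  shows "Im c = 0"
proof -
  define N where "N = (\<Sum>i<n. (cmod (w i))\<^sup>2)"
  obtain i0 where "i0 < n" "w i0 \<noteq> 0" using w by blast
  then have "N > 0" unfolding N_def by (intro sum_pos2[of _ i0]) auto
  define z where "z = (\<Sum>i<n. cnj (w i) * (\<Sum>j<n. complex_of_real (S i j) * w j))"
  have "z = (\<Sum>i<n. c * (cnj (w i) * w i))" unfolding z_def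
    by (rule sum.cong) (auto simp: eq)
  also have "\<dots> = c * complex_of_real N" unfolding N_def
    by (simp add: sum_distrib_left complex_norm_square[symmetric] mult.commute)
  finally have z_eq: "z = c * complex_of_real N" .
  \<comment> \<open>\<open>z\<close> is the Hermitian form of \<open>S\<close> at \<open>w\<close>, hence real.\<close>
  have "cnj z = (\<Sum>i<n. \<Sum>j<n. w i * (complex_of_real (S i j) * cnj (w j)))"
    unfolding z_def by (simp add: sum_distrib_left)
  also have "\<dots> = (\<Sum>j<n. \<Sum>i<n. w i * (complex_of_real (S i j) * cnj (w j)))"
    by (rule sum.swap)
  also have "\<dots> = z" unfolding z_def sum_distrib_left
    using S unfolding sym_matrix_def by (intro sum.cong refl) (auto simp: algebra_simps)
  finally have "Im z = 0" by (metis cnj.simps(2) neg_equal_zero)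
  thus ?thesis using z_eq \<open>N > 0\<close> by simp
qed

lemma sym_matrix_has_real_eigenvector:
  assumes n: "n > 0" and S: "sym_matrix n S"
  shows "\<exists>lam v i0. i0 < n \<and> v i0 \<noteq> 0 \<and> (\<forall>i<n. mat_vec n S v i = lam * v i)"
proof -
  define A where "A = mat n n (\<lambda>(i,j). complex_of_real (S i j))"
  have A: "A \<in> carrier_mat n n" by (simp add: A_def)
  obtain as where cp: "char_poly A = (\<Prod>a\<leftarrow>as. [:-a,1:])" and len: "length as = n"
    using char_poly_factorized[OF A] by blast
  then obtain c where "c \<in> set as" using n by (cases as) auto
  hence "poly (char_poly A) c = 0" unfolding cp
    by (simp add: poly_prod_list prod_list_zero_iff)
  hence "eigenvalue A c" using eigenvalue_root_char_poly[OF A] by simp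
  then obtain w where "eigenvector A w c" unfolding eigenvalue_def by blast
  hence w: "w \<in> carrier_vec n" "w \<noteq> 0\<^sub>v n" "A *\<^sub>v w = c \<cdot>\<^sub>v w" using A unfolding eigenvector_def by auto
  have eq: "(\<Sum>j<n. complex_of_real (S i j) * w $ j) = c * w $ i" if i: "i < n" for i
  proof -
    have "(A *\<^sub>v w) $ i = (\<Sum>j<n. complex_of_real (S i j) * w $ j)"
      using i w(1) unfolding A_def by (auto simp: scalar_prod_def row_def lessThan_atLeast0 intro!: sum.cong)
    thus ?thesis using w i by simp
  qed
  obtain i0 where i0: "i0 < n" "w $ i0 \<noteq> 0" using w(1,2) by (metis eq_vecI carrier_vecD index_zero_vec(1,2))
  have "Im c = 0" by (rule sym_matrix_complex_eigenvalue_real[OF S _ eq]) (use i0 in auto)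
  define lam where "lam = Re c"
  have ceq: "c = complex_of_real lam" using \<open>Im c = 0\<close> unfolding lam_def by (simp add: complex_eq_iff)
  \<comment> \<open>Real and imaginary parts of \<open>w\<close> are real eigenvectors.\<close>
  define x where "x i = Re (w $ i)" for i
  define y where "y i = Im (w $ i)" for i
  have ev_Re: "mat_vec n S x i = lam * x i" if "i < n" for i
  proof -
    have "Re (\<Sum>j<n. complex_of_real (S i j) * w $ j) = Re (c * w $ i)" using eq[OF that] by simp
    thus ?thesis unfolding mat_vec_def x_def ceq by (simp add: Re_sum)
  qed
  have ev_Im: "mat_vec n S y i = lam * y i" if "i < n" for i
  proof -
    have "Im (\<Sum>j<n. complex_of_real (S i j) * w $ j) = Im (c * w $ i)" using eq[OF that] by simp
    thus ?thesis unfolding mat_vec_def y_def ceq by (simp add: Im_sum)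
  qed
  obtain v where v0: "v i0 \<noteq> 0" and v: "\<forall>i<n. mat_vec n S v i = lam * v i"
  proof (cases "x i0 = 0")
    case True
    hence "y i0 \<noteq> 0" using i0 unfolding x_def y_def by (simp add: complex_eq_iff)
    thus ?thesis using that ev_Im by blast
  next
    case False thus ?thesis using that ev_Re by blast
  qed
  then show ?thesis using i0(1) by blast
qed

lemma sym_matrix_has_unit_eigenvector:
  assumes "n > 0" "sym_matrix n S"
  shows "\<exists>lam v. (\<Sum>i<n. v i * v i) = 1 \<and> (\<forall>i<n. mat_vec n S v i = lam * v i)"
proof -
  obtain lam v i0 where i0: "i0 < n" and v0: "v i0 \<noteq> 0" and v: "\<forall>i<n. mat_vec n S v i = lam * v i"
    using sym_matrix_has_real_eigenvector[OF assms] by blast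
  define s where "s = (\<Sum>i<n. v i * v i)"
  have "s > 0" unfolding s_def by (rule sum_pos2[of _ i0]) (use i0 v0 in \<open>auto simp: zero_less_mult_iff\<close>)
  define u where "u i = v i / sqrt s" for i
  have "(\<Sum>i<n. u i * u i) = 1"
    using \<open>s > 0\<close> by (simp add: u_def sum_divide_distrib[symmetric] s_def)
  moreover have "\<forall>i<n. mat_vec n S u i = lam * u i"
    using v unfolding mat_vec_def u_def by (simp add: sum_divide_distrib[symmetric])
  ultimately show ?thesis by blast
qed

lemma householder_involution:
  assumes "s = (\<Sum>k<m. u k * u k)" "c * c * s = 2 * c"
  shows "involution m (\<lambda>i j. (if i = j then 1 else 0) - c * u i * u j)"
  unfolding involution_def mat_prod_def
proof (intro allI impI)
  fix i j assume i: "i < m" and j: "j < m"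
  have "(\<Sum>k<m. ((if i = k then 1 else 0) - c * u i * u k) * ((if k = j then 1 else 0) - c * u k * u j))
      = (\<Sum>k<m. (if i = k then 1 else 0) * (if k = j then 1 else 0)
          - c * u j * (if i = k then u k else 0) - c * u i * (if k = j then u k else 0)
          + c * c * u i * u j * (u k * u k))"
    by (intro sum.cong) (auto simp: algebra_simps)
  also have "\<dots> = (\<Sum>k<m. (if i = k then 1 else 0) * (if k = j then 1 else 0))
      - c * u j * (\<Sum>k<m. if i = k then u k else 0) - c * u i * (\<Sum>k<m. if k = j then u k else 0)
      + c * c * u i * u j * s"
    unfolding assms(1) by (simp only: sum.distrib sum_subtractf flip: sum_distrib_left)
  also have "\<dots> = (if i = j then 1 else 0) - 2 * c * u i * u j + c * c * s * u i * u j"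
    using i j
    by (simp only: sum_delta_mult_delta sum.delta sum.delta' finite_lessThan lessThan_iff if_True)
       (simp add: algebra_simps)
  also have "\<dots> = (if i = j then 1 else 0)" using assms(2) by simp
  finally show "(\<Sum>k<m. ((if i = k then 1 else 0) - c * u i * u k) * ((if k = j then 1 else 0) - c * u k * u j))
      = (if i = j then 1 else 0)" .
qed

lemma exists_reflection_with_last_column:
  assumes v: "(\<Sum>i<Suc n. v i * v i) = 1"
  shows "\<exists>H. sym_matrix (Suc n) H \<and> involution (Suc n) H \<and> (\<forall>i<Suc n. H i n = v i)"
proof -
  define u where "u i = v i - (if i = n then 1 else 0)" for i
  define s where "s = (\<Sum>i<Suc n. u i * u i)"
  show ?thesis
  proof (cases "s = 0")
    case True
    have "\<forall>i\<in>{..<Suc n}. u i * u i = 0"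
      using True unfolding s_def by (subst sum_nonneg_eq_0_iff[symmetric]) auto
    hence "\<And>i. i < Suc n \<Longrightarrow> v i = (if i = n then 1 else 0)" unfolding u_def by auto
    thus ?thesis
      by (intro exI[of _ "\<lambda>i j. if i = j then 1 else 0"])
         (auto simp: sym_matrix_def involution_def mat_prod_def sum_delta_mult_delta)
  next
    case False
    \<comment> \<open>The Householder reflection in the hyperplane orthogonal to \<open>v - e\<^sub>n\<close>.\<close>
    have s: "s = 2 - 2 * v n"
    proof -
      have "\<And>i. u i * u i = v i * v i - 2 * (if i = n then v i else 0) + (if i = n then 1 else 0)"
        unfolding u_def by (auto simp: algebra_simps)
      hence "s = (\<Sum>i<Suc n. v i * v i) - 2 * (\<Sum>i<Suc n. (if i = n then v i else 0))
          + (\<Sum>i<Suc n. (if i = n then 1 else 0))"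
        unfolding s_def by (simp add: sum.distrib sum_subtractf sum_distrib_left)
      thus ?thesis using v by simp
    qed
    define c where "c = 2 / s"
    have cun: "c * u n = -1" unfolding c_def u_def using False s by (simp add: field_simps)
    have cs: "c * c * s = 2 * c" unfolding c_def using False by (simp add: field_simps)
    define H where "H = (\<lambda>i j. (if i = j then 1 else 0) - c * u i * u j)"
    have "sym_matrix (Suc n) H" unfolding sym_matrix_def H_def by auto
    moreover have "involution (Suc n) H"
      unfolding H_def by (rule householder_involution[OF s_def cs])
    moreover have "H i n = v i" for i
    proof -
      have "H i n = (if i = n then 1 else 0) - (c * u n) * u i" unfolding H_def by (simp add: algebra_simps)
      also have "\<dots> = v i" using cun unfolding u_def by simp
      finally show "H i n = v i" .
    qed
    ultimately show ?thesis by blast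
  qed
qed

lemma eigensystem_extend_last:
  assumes T: "sym_matrix (Suc n) T" and Tn: "\<And>i. i < Suc n \<Longrightarrow> T i n = lam * (if i = n then 1 else 0)"
    and o: "orthonormal_rows n u" and ev: "eigensystem n T e u"
  shows "\<exists>e' y. orthonormal_rows (Suc n) y \<and> eigensystem (Suc n) T e' y"
proof -
  define y where
    "y k a = (if k < n then (if a < n then u k a else 0) else (if a = n then 1 else (0::real)))" for k a
  define e' where "e' k = (if k < n then e k else lam)" for k
  have "orthonormal_rows (Suc n) y"
    unfolding orthonormal_rows_def
  proof (intro allI impI)
    fix k l assume "k < Suc n" "l < Suc n"
    then consider "k < n" "l < n" | "k < n" "l = n" | "k = n" "l < n" | "k = n" "l = n"
      by linarith
    then show "(\<Sum>i<Suc n. y k i * y l i) = (if k = l then 1 else 0)"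
    proof cases
      case 1
      then have "(\<Sum>i<Suc n. y k i * y l i) = (\<Sum>i<n. u k i * u l i)" by (simp add: y_def)
      thus ?thesis using o 1 unfolding orthonormal_rows_def by simp
    qed (simp_all add: y_def)
  qed
  moreover have "eigensystem (Suc n) T e' y"
    unfolding eigensystem_def
  proof (intro allI impI)
    fix k i assume k: "k < Suc n" and i: "i < Suc n"
    show "mat_vec (Suc n) T (y k) i = e' k * y k i"
    proof (cases "k < n")
      case True
      show ?thesis
      proof (cases "i < n")
        case True
        have "mat_vec (Suc n) T (y k) i = mat_vec n T (u k) i"
          unfolding mat_vec_def using \<open>k < n\<close> by (simp add: y_def)
        thus ?thesis using ev \<open>k < n\<close> True unfolding eigensystem_def by (simp add: e'_def y_def)
      next
        case False
        hence "i = n" using i by simp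
        have "mat_vec (Suc n) T (y k) i = (\<Sum>j<n. T n j * u k j)"
          unfolding mat_vec_def using \<open>k < n\<close> \<open>i = n\<close> by (simp add: y_def)
        also have "\<dots> = 0"
          using Tn T unfolding sym_matrix_def by (intro sum.neutral) auto
        finally show ?thesis using \<open>i = n\<close> \<open>k < n\<close> by (simp add: y_def)
      qed
    next
      case False
      hence "k = n" using k by simp
      have "mat_vec (Suc n) T (y k) i = T i n"
        unfolding mat_vec_def using \<open>k = n\<close>
        by (simp add: y_def sum.delta if_distrib[of "\<lambda>x. _ * x"] cong: if_cong)
      thus ?thesis using Tn[OF i] \<open>k = n\<close> by (simp add: e'_def y_def)
    qed
  qed
  ultimately show ?thesis by blast
qed

lemma eigensystem_conjugate:
  assumes H: "sym_matrix n H" "involution n H" and o: "orthonormal_rows n y"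
    and ev: "eigensystem n (mat_prod n H (mat_prod n S H)) e y"
  shows "orthonormal_rows n (\<lambda>k. mat_vec n H (y k)) \<and> eigensystem n S e (\<lambda>k. mat_vec n H (y k))"
proof
  show "orthonormal_rows n (\<lambda>k. mat_vec n H (y k))"
    using o sym_involution_inner[OF H] unfolding orthonormal_rows_def by simp
  show "eigensystem n S e (\<lambda>k. mat_vec n H (y k))"
    unfolding eigensystem_def
  proof (intro allI impI)
    fix k i assume k: "k < n" and i: "i < n"
    have "mat_vec n S (mat_vec n H (y k)) i = mat_vec n H (mat_vec n H (mat_vec n S (mat_vec n H (y k)))) i"
      using involution_mat_vec_twice[OF H(2) i] by simp
    also have "\<dots> = mat_vec n H (mat_vec n (mat_prod n H (mat_prod n S H)) (y k)) i"
      by (simp add: mat_vec_mat_vec)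
    also have "mat_vec n H (mat_vec n (mat_prod n H (mat_prod n S H)) (y k)) = mat_vec n H (\<lambda>a. e k * y k a)"
      using ev k unfolding eigensystem_def by (intro mat_vec_cong) simp
    finally show "mat_vec n S (mat_vec n H (y k)) i = e k * mat_vec n H (y k) i"
      by (simp add: mat_vec_scale)
  qed
qed

lemma sym_matrix_conjugate:
  assumes "sym_matrix m H" "sym_matrix m S"
  shows "sym_matrix m (mat_prod m H (mat_prod m S H))"
  unfolding sym_matrix_def
proof (intro allI impI)
  fix i j assume "i < m" "j < m"
  have T_sum: "mat_prod m H (mat_prod m S H) i j = (\<Sum>a<m. \<Sum>b<m. H i a * S a b * H b j)" for i j
    unfolding mat_prod_def by (simp add: sum_distrib_left mult.assoc)
  have "mat_prod m H (mat_prod m S H) j i = (\<Sum>b<m. \<Sum>a<m. H i a * S a b * H b j)"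
    using assms \<open>i < m\<close> \<open>j < m\<close> unfolding T_sum sym_matrix_def by (intro sum.cong refl) auto
  also have "\<dots> = mat_prod m H (mat_prod m S H) i j" unfolding T_sum by (rule sum.swap)
  finally show "mat_prod m H (mat_prod m S H) i j = mat_prod m H (mat_prod m S H) j i" by simp
qed

text \<open>An involution \<open>H\<close> with \<open>n\<close>-th column \<open>v\<close> maps \<open>e\<^sub>n\<close> to \<open>v\<close> and \<open>v\<close> back to \<open>e\<^sub>n\<close>.\<close>
lemma conjugate_last_column:
  assumes H: "involution m H" and Hv: "\<forall>i<m. H i n = v i"
    and ev: "\<forall>i<m. mat_vec m S v i = lam * v i" and "i < m" "n < m"
  shows "mat_prod m H (mat_prod m S H) i n = lam * (if i = n then 1 else 0)"
proof -
  have "mat_prod m H (mat_prod m S H) i n = mat_vec m H (mat_vec m S (\<lambda>b. H b n)) i"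
    by (simp add: mat_vec_def mat_prod_def)
  also have "mat_vec m S (\<lambda>b. H b n) = mat_vec m S v"
    using Hv by (intro mat_vec_cong) simp
  also have "mat_vec m H (mat_vec m S v) = mat_vec m H (\<lambda>a. lam * v a)"
    using ev by (intro mat_vec_cong) simp
  also have "\<dots> i = lam * mat_vec m H v i" by (simp add: mat_vec_scale)
  also have "mat_vec m H v = mat_vec m H (\<lambda>b. H b n)"
    using Hv by (intro mat_vec_cong) simp
  also have "\<dots> i = (if i = n then 1 else 0)"
    using H \<open>i < m\<close> \<open>n < m\<close> unfolding involution_def mat_prod_def mat_vec_def by auto
  finally show ?thesis .
qed

text \<open>Deflation: conjugating by a reflection that sends \<open>e\<^sub>n\<close> to a unit eigenvector splits off
  the last coordinate.\<close>
theorem sym_matrix_eigensystem: "sym_matrix n S \<Longrightarrow> \<exists>e u. orthonormal_rows n u \<and> eigensystem n S e u"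
proof (induction n arbitrary: S)
  case 0
  show ?case by (auto simp: orthonormal_rows_def eigensystem_def)
next
  case (Suc n S)
  obtain lam v where v: "(\<Sum>i<Suc n. v i * v i) = 1" and ev: "\<forall>i<Suc n. mat_vec (Suc n) S v i = lam * v i"
    using sym_matrix_has_unit_eigenvector[of "Suc n" S] Suc.prems by auto
  obtain H where H: "sym_matrix (Suc n) H" "involution (Suc n) H" and Hv: "\<forall>i<Suc n. H i n = v i"
    using exists_reflection_with_last_column[OF v] by blast
  define T where "T = mat_prod (Suc n) H (mat_prod (Suc n) S H)"
  have T: "sym_matrix (Suc n) T" unfolding T_def by (rule sym_matrix_conjugate[OF H(1) Suc.prems])
  have Tn: "T i n = lam * (if i = n then 1 else 0)" if "i < Suc n" for i
    unfolding T_def using H(2) Hv ev that by (intro conjugate_last_column) auto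
  have "sym_matrix n T" using T unfolding sym_matrix_def by auto
  with Suc.IH obtain e u where "orthonormal_rows n u" "eigensystem n T e u" by blast
  then obtain e' y where "orthonormal_rows (Suc n) y" "eigensystem (Suc n) T e' y"
    using eigensystem_extend_last[OF T Tn] by blast
  then show ?case using eigensystem_conjugate[OF H] unfolding T_def by blast
qed

lemma orthonormal_rows_mat:
  assumes "orthonormal_rows n u"
  defines "U \<equiv> mat n n (\<lambda>(i, k). u k i)"
  shows "transpose_mat U * U = 1\<^sub>m n" and "U * transpose_mat U = 1\<^sub>m n"
proof -
  show UtU: "transpose_mat U * U = 1\<^sub>m n"
  proof (rule eq_matI)
    fix k l assume k: "k < dim_row (1\<^sub>m n)" and l: "l < dim_col (1\<^sub>m n)"
    have "(transpose_mat U * U) $$ (k, l) = (\<Sum>i<n. u k i * u l i)"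
      using k l by (simp add: U_def scalar_prod_def atLeast0LessThan)
    also have "\<dots> = 1\<^sub>m n $$ (k, l)" using assms k l unfolding orthonormal_rows_def by simp
    finally show "(transpose_mat U * U) $$ (k, l) = 1\<^sub>m n $$ (k, l)" .
  qed (auto simp: U_def)
  show "U * transpose_mat U = 1\<^sub>m n"
    by (rule mat_mult_left_right_inverse[OF _ _ UtU]) (auto simp: U_def)
qed

lemma orthonormal_rows_imp_cols:
  assumes "orthonormal_rows n u"
  shows "orthonormal_cols n u"
  unfolding orthonormal_cols_def
proof (intro allI impI)
  fix i j assume "i < n" "j < n"
  then have "(\<Sum>k<n. u k i * u k j) = (mat n n (\<lambda>(i, k). u k i) * transpose_mat (mat n n (\<lambda>(i, k). u k i))) $$ (i, j)"
    by (simp add: scalar_prod_def atLeast0LessThan)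
  then show "(\<Sum>k<n. u k i * u k j) = (if i = j then 1 else 0)"
    using orthonormal_rows_mat(2)[OF assms] \<open>i < n\<close> \<open>j < n\<close> by simp
qed

lemma char_poly_eigensystem:
  assumes o: "orthonormal_rows n u" and ev: "eigensystem n S e u"
  shows "char_poly (mat n n (\<lambda>(i, j). S i j)) = (\<Prod>a\<leftarrow>map e [0..<n]. [:-a, 1:])"
proof -
  define U where "U = mat n n (\<lambda>(i, k). u k i)"
  define D where "D = mat n n (\<lambda>(i, j). if i = j then e i else 0)"
  define M where "M = mat n n (\<lambda>(i, j). S i j)"
  have U: "U \<in> carrier_mat n n" and D: "D \<in> carrier_mat n n" and M: "M \<in> carrier_mat n n"
    and Ut: "transpose_mat U \<in> carrier_mat n n"
    by (auto simp: U_def D_def M_def)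
  note inv = orthonormal_rows_mat[OF o, folded U_def]
  have MU: "M * U = U * D"
  proof (rule eq_matI)
    fix i k assume "i < dim_row (U * D)" "k < dim_col (U * D)"
    hence i: "i < n" and k: "k < n" using U D by auto
    have "(M * U) $$ (i, k) = mat_vec n S (u k) i"
      using i k by (simp add: U_def M_def scalar_prod_def atLeast0LessThan mat_vec_def)
    also have "\<dots> = e k * u k i" using ev i k unfolding eigensystem_def by simp
    also have "\<dots> = (U * D) $$ (i, k)"
      using i k by (simp add: U_def D_def scalar_prod_def atLeast0LessThan
          if_distrib[of "\<lambda>x. _ * x"] sum.delta' cong: if_cong)
    finally show "(M * U) $$ (i, k) = (U * D) $$ (i, k)" .
  qed (use U D M in auto)
  have "M = (M * U) * transpose_mat U" using M U Ut inv(2) by (simp add: assoc_mult_mat)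
  then have "M = U * D * transpose_mat U" by (simp add: MU)
  then have "similar_mat_wit M D U (transpose_mat U)"
    unfolding similar_mat_wit_def Let_def using M D U Ut inv by auto
  then have "similar_mat M D" unfolding similar_mat_def by blast
  hence "char_poly M = char_poly D" by (rule char_poly_similar)
  also have "\<dots> = (\<Prod>a\<leftarrow>diag_mat D. [:-a, 1:])"
    by (rule char_poly_upper_triangular[OF D]) (auto simp: upper_triangular_def D_def)
  also have "diag_mat D = map e [0..<n]" by (auto simp: diag_mat_def D_def)
  finally show ?thesis unfolding M_def .
qed

lemma proots_prod_list_linear: "proots (\<Prod>a\<leftarrow>xs. [:-a, 1::real:]) = mset xs"
proof (induction xs)
  case (Cons x xs)
  have "(\<Prod>a\<leftarrow>xs. [:-a, 1::real:]) \<noteq> 0" by (auto simp: prod_list_zero_iff)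
  then have "proots ([:-x, 1:] * (\<Prod>a\<leftarrow>xs. [:-a, 1::real:]))
      = proots [:-x, 1:] + proots (\<Prod>a\<leftarrow>xs. [:-a, 1::real:])"
    by (intro proots_mult) auto
  moreover have "proots [:-x, 1::real:] = {#x#}" using proots_linear_factor[of "-x"] by simp
  ultimately show ?case using Cons by simp
qed simp

definition sorted_eigensystem :: "nat \<Rightarrow> (nat \<Rightarrow> nat \<Rightarrow> real) \<Rightarrow> (nat \<Rightarrow> real) \<Rightarrow> (nat \<Rightarrow> nat \<Rightarrow> real) \<Rightarrow> bool" where
  "sorted_eigensystem n S e u \<longleftrightarrow> orthonormal_rows n u \<and> eigensystem n S e u
     \<and> eigs_desc (mat n n (\<lambda>(i, j). S i j)) = map e [0..<n]
     \<and> (\<forall>k l. k \<le> l \<longrightarrow> l < n \<longrightarrow> e l \<le> e k)"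

lemma sym_matrix_sorted_eigensystem:
  assumes "sym_matrix n S"
  shows "\<exists>e u. sorted_eigensystem n S e u"
proof -
  obtain e u where o: "orthonormal_rows n u" and ev: "eigensystem n S e u"
    using sym_matrix_eigensystem[OF assms] by blast
  define es where "es = rev (sort (map e [0..<n]))"
  have ed: "eigs_desc (mat n n (\<lambda>(i, j). S i j)) = es"
    unfolding eigs_desc_def char_poly_eigensystem[OF o ev] proots_prod_list_linear es_def
    by (simp only: sorted_list_of_multiset_mset)
  have "mset es = mset (map e [0..<n])" unfolding es_def by simp
  then obtain p where p: "p permutes {..<n}" and pl: "permute_list p (map e [0..<n]) = es"
    by (metis mset_eq_permutation length_map length_upt diff_zero)
  have pn: "k < n \<Longrightarrow> p k < n" for k using permutes_in_image[OF p] by simp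
  have pinj: "k < n \<Longrightarrow> l < n \<Longrightarrow> p k = p l \<longleftrightarrow> k = l" for k l
    using permutes_inj_on[OF p] unfolding inj_on_def by auto
  have esn: "k < n \<Longrightarrow> es ! k = e (p k)" for k
    using permute_list_nth[of p "map e [0..<n]" k] p pl pn[of k] by simp
  have "orthonormal_rows n (u \<circ> p)" using o pn pinj unfolding orthonormal_rows_def by auto
  moreover have "eigensystem n S (e \<circ> p) (u \<circ> p)" using ev pn unfolding eigensystem_def by auto
  moreover have "es = map (e \<circ> p) [0..<n]"
    by (rule nth_equalityI) (auto simp: es_def esn[unfolded es_def])
  moreover have "e (p l) \<le> e (p k)" if kl: "k \<le> l" "l < n" for k l
  proof -
    have len: "length (sort (map e [0..<n])) = n" by simp
    have "e (p l) = sort (map e [0..<n]) ! (n - 1 - l)"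
      using esn[of l] kl rev_nth[of l "sort (map e [0..<n])"] len unfolding es_def by simp
    also have "\<dots> \<le> sort (map e [0..<n]) ! (n - 1 - k)" by (rule sorted_nth_mono) (use kl len in auto)
    also have "\<dots> = e (p k)"
      using esn[of k] kl rev_nth[of k "sort (map e [0..<n])"] len unfolding es_def by simp
    finally show ?thesis .
  qed
  ultimately show ?thesis unfolding sorted_eigensystem_def using ed by (metis comp_apply)
qed

section \<open>Comparison of second eigenvalues\<close>

lemma orthonormal_expansion:
  assumes "orthonormal_rows n u" "i < n"
  shows "x i = (\<Sum>k<n. (\<Sum>j<n. x j * u k j) * u k i)"
proof -
  have "(\<Sum>k<n. (\<Sum>j<n. x j * u k j) * u k i) = (\<Sum>k<n. \<Sum>j<n. x j * (u k j * u k i))"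
    by (simp add: sum_distrib_right mult.assoc)
  also have "\<dots> = (\<Sum>j<n. x j * (\<Sum>k<n. u k j * u k i))"
    by (subst sum.swap) (simp add: sum_distrib_left)
  also have "\<dots> = (\<Sum>j<n. if j = i then x j else 0)"
    using orthonormal_rows_imp_cols[OF assms(1)] assms(2) unfolding orthonormal_cols_def
    by (intro sum.cong) auto
  also have "\<dots> = x i" using assms(2) by (simp add: sum.delta)
  finally show ?thesis by simp
qed

lemma sum_squares_orthonormal_expansion:
  assumes "orthonormal_rows n u"
  shows "(\<Sum>i<n. x i * x i) = (\<Sum>k<n. (\<Sum>i<n. x i * u k i)\<^sup>2)"
proof -
  have "(\<Sum>i<n. x i * x i) = (\<Sum>i<n. x i * (\<Sum>k<n. (\<Sum>j<n. x j * u k j) * u k i))"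
    using orthonormal_expansion[OF assms] by (intro sum.cong) auto
  also have "\<dots> = (\<Sum>i<n. \<Sum>k<n. (\<Sum>j<n. x j * u k j) * (x i * u k i))"
    by (simp add: sum_distrib_left algebra_simps)
  also have "\<dots> = (\<Sum>k<n. (\<Sum>j<n. x j * u k j) * (\<Sum>i<n. x i * u k i))"
    by (subst sum.swap) (simp add: sum_distrib_left)
  finally show ?thesis by (simp add: power2_eq_square)
qed

lemma quad_form_eigen_expansion:
  assumes o: "orthonormal_rows n u" and ev: "eigensystem n S e u"
  shows "quad_form n S x = (\<Sum>k<n. e k * (\<Sum>i<n. x i * u k i)\<^sup>2)"
proof -
  define c where "c k = (\<Sum>j<n. x j * u k j)" for k
  have "mat_vec n S x i = (\<Sum>k<n. c k * (e k * u k i))" if i: "i < n" for i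
  proof -
    have "mat_vec n S x i = (\<Sum>j<n. S i j * (\<Sum>k<n. c k * u k j))"
      unfolding mat_vec_def c_def using orthonormal_expansion[OF o] by (intro sum.cong) auto
    also have "\<dots> = (\<Sum>j<n. \<Sum>k<n. c k * (S i j * u k j))"
      by (simp add: sum_distrib_left algebra_simps)
    also have "\<dots> = (\<Sum>k<n. c k * mat_vec n S (u k) i)"
      unfolding mat_vec_def by (subst sum.swap) (simp add: sum_distrib_left)
    also have "\<dots> = (\<Sum>k<n. c k * (e k * u k i))"
      using ev i unfolding eigensystem_def by (intro sum.cong) auto
    finally show ?thesis .
  qed
  then have "quad_form n S x = (\<Sum>i<n. x i * (\<Sum>k<n. c k * (e k * u k i)))"
    unfolding quad_form_mat_vec by (intro sum.cong) auto
  also have "\<dots> = (\<Sum>i<n. \<Sum>k<n. e k * c k * (x i * u k i))"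
    by (simp add: sum_distrib_left algebra_simps)
  also have "\<dots> = (\<Sum>k<n. e k * c k * (\<Sum>i<n. x i * u k i))"
    by (subst sum.swap) (simp add: sum_distrib_left)
  finally show ?thesis by (simp add: c_def power2_eq_square algebra_simps)
qed

lemma quad_form_eigenvector:
  assumes "orthonormal_rows n u" "eigensystem n S e u" "k < n"
  shows "quad_form n S (u k) = e k"
proof -
  have "quad_form n S (u k) = (\<Sum>i<n. u k i * (e k * u k i))"
    unfolding quad_form_mat_vec using assms(2,3) unfolding eigensystem_def by (intro sum.cong) auto
  also have "\<dots> = e k * (\<Sum>i<n. u k i * u k i)" by (simp add: sum_distrib_left algebra_simps)
  finally show ?thesis using assms(1,3) unfolding orthonormal_rows_def by simp
qed

lemma spectral_gap_sorted_nonneg: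
  assumes "sorted_eigensystem n S e u" "n \<ge> 2" "\<forall>k<n. e k \<ge> 0"
  shows "spectral_gap (mat n n (\<lambda>(i, j). S i j)) = 1 - e 1"
proof -
  have "e (n - 1) \<le> e 1" "0 \<le> e (n - 1)" "0 \<le> e 1"
    using assms unfolding sorted_eigensystem_def by auto
  then show ?thesis using assms unfolding spectral_gap_def sorted_eigensystem_def
    by (simp add: last_map)
qed

text \<open>The min-max principle for the second eigenvalue: test the form of \<open>S\<^sub>2\<close> on a vector in
  the span of the top two eigenvectors of \<open>S\<^sub>1\<close> that is orthogonal to the top eigenvector of \<open>S\<^sub>2\<close>.\<close>
lemma second_eigenvalue_mono:
  assumes n: "n \<ge> 2" and S1: "sorted_eigensystem n S1 e1 u1" and S2: "sorted_eigensystem n S2 e2 u2"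
    and le: "\<And>x. quad_form n S1 x \<le> quad_form n S2 x"
  shows "e1 1 \<le> e2 1"
proof -
  have o1: "orthonormal_rows n u1" and ev1: "eigensystem n S1 e1 u1"
    and o2: "orthonormal_rows n u2" and ev2: "eigensystem n S2 e2 u2"
    using S1 S2 unfolding sorted_eigensystem_def by simp_all
  define al where "al = (\<Sum>i<n. u2 0 i * u1 0 i)"
  define be where "be = (\<Sum>i<n. u2 0 i * u1 1 i)"
  define a where "a = (if al = 0 \<and> be = 0 then 1 else be)"
  define b where "b = (if al = 0 \<and> be = 0 then 0 else - al)"
  have ab: "a * al + b * be = 0" unfolding a_def b_def by auto
  have ab_pos: "a\<^sup>2 + b\<^sup>2 > 0" unfolding a_def b_def by (auto simp: sum_power2_gt_zero_iff)
  define x where "x i = a * u1 0 i + b * u1 1 i" for i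
  have coord1: "(\<Sum>i<n. x i * u1 k i)\<^sup>2 = (if k = 0 then a\<^sup>2 else 0) + (if k = 1 then b\<^sup>2 else 0)"
    if k: "k < n" for k
  proof -
    have "(\<Sum>i<n. x i * u1 k i) = a * (\<Sum>i<n. u1 0 i * u1 k i) + b * (\<Sum>i<n. u1 1 i * u1 k i)"
      unfolding x_def by (simp add: sum.distrib sum_distrib_left algebra_simps)
    thus ?thesis using o1 k n unfolding orthonormal_rows_def by auto
  qed
  have "(\<Sum>i<n. x i * x i) = (\<Sum>k<n. (if k = 0 then a\<^sup>2 else 0) + (if k = 1 then b\<^sup>2 else 0))"
    unfolding sum_squares_orthonormal_expansion[OF o1] by (rule sum.cong) (auto simp: coord1)
  then have norm: "(\<Sum>i<n. x i * x i) = a\<^sup>2 + b\<^sup>2" using n by (simp add: sum.distrib sum.delta)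
  have "e1 1 * (a\<^sup>2 + b\<^sup>2) \<le> e1 0 * a\<^sup>2 + e1 1 * b\<^sup>2"
    using S1 n unfolding sorted_eigensystem_def by (simp add: distrib_left mult_right_mono)
  also have "\<dots> = (\<Sum>k<n. (if k = 0 then e1 k * a\<^sup>2 else 0) + (if k = 1 then e1 k * b\<^sup>2 else 0))"
    using n by (simp add: sum.distrib sum.delta)
  also have "\<dots> = quad_form n S1 x"
    unfolding quad_form_eigen_expansion[OF o1 ev1] by (rule sum.cong) (auto simp: coord1)
  also have "\<dots> \<le> quad_form n S2 x" by (rule le)
  also have "\<dots> \<le> (\<Sum>k<n. e2 1 * (\<Sum>i<n. x i * u2 k i)\<^sup>2)"
    unfolding quad_form_eigen_expansion[OF o2 ev2]
  proof (rule sum_mono)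
    fix k assume k: "k \<in> {..<n}"
    have "(\<Sum>i<n. x i * u2 0 i) = a * al + b * be"
      unfolding x_def al_def be_def by (simp add: sum.distrib sum_distrib_left algebra_simps)
    then show "e2 k * (\<Sum>i<n. x i * u2 k i)\<^sup>2 \<le> e2 1 * (\<Sum>i<n. x i * u2 k i)\<^sup>2"
      using ab S2 k unfolding sorted_eigensystem_def by (cases "k = 0") (auto intro: mult_right_mono)
  qed
  also have "\<dots> = e2 1 * (a\<^sup>2 + b\<^sup>2)"
    by (simp add: sum_distrib_left[symmetric] sum_squares_orthonormal_expansion[OF o2, symmetric] norm)
  finally show ?thesis using ab_pos by simp
qed

lemma spectral_gap_mono_quad_form:
  assumes n: "n \<ge> 2" and "sym_matrix n S1" "sym_matrix n S2"
    and le: "\<And>x. 0 \<le> quad_form n S1 x \<and> quad_form n S1 x \<le> quad_form n S2 x"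
  shows "spectral_gap (mat n n (\<lambda>(i, j). S2 i j)) \<le> spectral_gap (mat n n (\<lambda>(i, j). S1 i j))"
proof -
  obtain e1 u1 e2 u2 where S1: "sorted_eigensystem n S1 e1 u1" and S2: "sorted_eigensystem n S2 e2 u2"
    using sym_matrix_sorted_eigensystem assms(2,3) by metis
  have "\<forall>k<n. e1 k \<ge> 0" "\<forall>k<n. e2 k \<ge> 0"
    using quad_form_eigenvector S1 S2 le unfolding sorted_eigensystem_def by (metis order_trans)+
  then show ?thesis
    using spectral_gap_sorted_nonneg[OF S1 n] spectral_gap_sorted_nonneg[OF S2 n]
      second_eigenvalue_mono[OF n S1 S2] le by simp
qed

section \<open>Spectral gaps of reversible kernels\<close>

definition reversible :: "'s set \<Rightarrow> ('s \<Rightarrow> real) \<Rightarrow> ('s \<Rightarrow> 's \<Rightarrow> real) \<Rightarrow> bool" where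
  "reversible \<Omega> w K \<longleftrightarrow> (\<forall>s\<in>\<Omega>. \<forall>t\<in>\<Omega>. w s * K s t = w t * K t s)"

definition kernel_form :: "'s set \<Rightarrow> ('s \<Rightarrow> real) \<Rightarrow> ('s \<Rightarrow> 's \<Rightarrow> real) \<Rightarrow> ('s \<Rightarrow> real) \<Rightarrow> real" where
  "kernel_form \<Omega> w K f = (\<Sum>s\<in>\<Omega>. \<Sum>t\<in>\<Omega>. f s * (w s * K s t) * f t)"

definition symmetrized :: "'s set \<Rightarrow> ('s \<Rightarrow> real) \<Rightarrow> ('s \<Rightarrow> 's \<Rightarrow> real) \<Rightarrow> nat \<Rightarrow> nat \<Rightarrow> real" where
  "symmetrized \<Omega> w K i j =
     sqrt (w (state_enum \<Omega> i)) * K (state_enum \<Omega> i) (state_enum \<Omega> j) / sqrt (w (state_enum \<Omega> j))"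

lemma state_enum_bij: "finite \<Omega> \<Longrightarrow> bij_betw (state_enum \<Omega>) {..<card \<Omega>} \<Omega>"
  unfolding state_enum_def lessThan_atLeast0 by (rule someI_ex[OF ex_bij_betw_nat_finite])

lemma state_enum_in: "finite \<Omega> \<Longrightarrow> i < card \<Omega> \<Longrightarrow> state_enum \<Omega> i \<in> \<Omega>"
  using state_enum_bij bij_betwE by blast

lemma sym_matrix_symmetrized:
  assumes "finite \<Omega>" "\<forall>s\<in>\<Omega>. w s > 0" "reversible \<Omega> w K"
  shows "sym_matrix (card \<Omega>) (symmetrized \<Omega> w K)"
  unfolding sym_matrix_def
proof (intro allI impI)
  fix i j assume "i < card \<Omega>" "j < card \<Omega>"
  then have a: "state_enum \<Omega> i \<in> \<Omega>" and b: "state_enum \<Omega> j \<in> \<Omega>"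
    using state_enum_in assms(1) by auto
  define sa where "sa = sqrt (w (state_enum \<Omega> i))"
  define sb where "sb = sqrt (w (state_enum \<Omega> j))"
  have "sa > 0" "sb > 0" using a b assms(2) unfolding sa_def sb_def by auto
  moreover have "sa * sa * K (state_enum \<Omega> i) (state_enum \<Omega> j) = sb * sb * K (state_enum \<Omega> j) (state_enum \<Omega> i)"
    using a b assms(2,3) unfolding reversible_def sa_def sb_def by (simp add: less_imp_le)
  ultimately show "symmetrized \<Omega> w K i j = symmetrized \<Omega> w K j i"
    unfolding symmetrized_def sa_def[symmetric] sb_def[symmetric] by (simp add: field_simps)
qed

lemma spectral_gap_symmetrized:
  assumes fin: "finite \<Omega>" and w: "\<forall>s\<in>\<Omega>. w s > 0"
  shows "spectral_gap (trans_mat \<Omega> K)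
       = spectral_gap (mat (card \<Omega>) (card \<Omega>) (\<lambda>(i, j). symmetrized \<Omega> w K i j))"
proof -
  define N where "N = card \<Omega>"
  define d where "d i = sqrt (w (state_enum \<Omega> i))" for i
  have d: "i < N \<Longrightarrow> d i > 0" for i using w state_enum_in[OF fin] unfolding d_def N_def by auto
  define T where "T = trans_mat \<Omega> K"
  define Dm where "Dm = mat N N (\<lambda>(i, j). if i = j then d i else 0)"
  define Di where "Di = mat N N (\<lambda>(i, j). if i = j then 1 / d i else 0)"
  have T: "T \<in> carrier_mat N N" unfolding T_def trans_mat_def N_def by simp
  have Dm: "Dm \<in> carrier_mat N N" and Di: "Di \<in> carrier_mat N N" by (auto simp: Dm_def Di_def)
  have Dm_T: "(Dm * T) $$ (i, l) = d i * T $$ (i, l)" if "i < N" "l < N" for i l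
    using that T by (simp add: Dm_def scalar_prod_def if_distrib[of "\<lambda>x. x * _"] sum.delta cong: if_cong)
  have conj: "mat N N (\<lambda>(i, j). symmetrized \<Omega> w K i j) = Dm * T * Di"
  proof (rule eq_matI)
    fix i j assume "i < dim_row (Dm * T * Di)" "j < dim_col (Dm * T * Di)"
    hence i: "i < N" and j: "j < N" using Dm Di by auto
    have "(Dm * T * Di) $$ (i, j) = row (Dm * T) i \<bullet> col Di j"
      by (rule index_mult_mat(1)) (use i j Dm T Di in auto)
    also have "\<dots> = (\<Sum>l\<in>{0..<N}. (Dm * T) $$ (i, l) * Di $$ (l, j))"
      unfolding scalar_prod_def using i j Dm T Di by (auto intro!: sum.cong)
    also have "\<dots> = (\<Sum>l\<in>{0..<N}. if l = j then d i * T $$ (i, l) * (1 / d l) else 0)"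
      using i j by (intro sum.cong) (auto simp: Dm_T Di_def)
    also have "\<dots> = d i * T $$ (i, j) / d j" using j by (simp add: sum.delta)
    finally show "mat N N (\<lambda>(i, j). symmetrized \<Omega> w K i j) $$ (i, j) = (Dm * T * Di) $$ (i, j)"
      using i j by (simp add: symmetrized_def d_def T_def trans_mat_def N_def)
  qed (use Dm Di in auto)
  have DD: "Dm * Di = 1\<^sub>m N"
  proof (rule eq_matI)
    fix i j assume "i < dim_row (1\<^sub>m N)" "j < dim_col (1\<^sub>m N)"
    hence i: "i < N" and j: "j < N" by auto
    have "(Dm * Di) $$ (i, j) = (\<Sum>l\<in>{0..<N}. Dm $$ (i, l) * Di $$ (l, j))"
      using i j Dm Di by (simp add: scalar_prod_def)
    also have "\<dots> = (\<Sum>l\<in>{0..<N}. if l = i then (if i = j then 1 else 0) else 0)"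
      using i j d[OF i] by (intro sum.cong) (auto simp: Dm_def Di_def)
    also have "\<dots> = 1\<^sub>m N $$ (i, j)" using i j by (simp add: sum.delta)
    finally show "(Dm * Di) $$ (i, j) = 1\<^sub>m N $$ (i, j)" .
  qed (auto simp: Dm_def Di_def)
  have "similar_mat_wit (mat N N (\<lambda>(i, j). symmetrized \<Omega> w K i j)) T Dm Di"
    unfolding similar_mat_wit_def Let_def
    using conj DD mat_mult_left_right_inverse[OF Dm Di DD] Dm Di T by auto
  hence "similar_mat (mat N N (\<lambda>(i, j). symmetrized \<Omega> w K i j)) T" unfolding similar_mat_def by blast
  hence "char_poly (mat N N (\<lambda>(i, j). symmetrized \<Omega> w K i j)) = char_poly T" by (rule char_poly_similar)
  thus ?thesis unfolding spectral_gap_def eigs_desc_def T_def N_def by simp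
qed

lemma quad_form_symmetrized:
  assumes fin: "finite \<Omega>" and w: "\<forall>s\<in>\<Omega>. w s > 0"
  shows "quad_form (card \<Omega>) (symmetrized \<Omega> w K) x
       = kernel_form \<Omega> w K (\<lambda>s. x (inv_into {..<card \<Omega>} (state_enum \<Omega>) s) / sqrt (w s))"
proof -
  define N where "N = card \<Omega>"
  define en where "en = state_enum \<Omega>"
  define f where "f s = x (inv_into {..<N} en s) / sqrt (w s)" for s
  have bij: "bij_betw en {..<N} \<Omega>" using state_enum_bij[OF fin] unfolding en_def N_def .
  have inv: "i < N \<Longrightarrow> inv_into {..<N} en (en i) = i" for i
    using bij by (simp add: bij_betw_def)
  have sq: "i < N \<Longrightarrow> sqrt (w (en i)) > 0" for i
    using w state_enum_in[OF fin] unfolding en_def N_def by auto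
  have "kernel_form \<Omega> w K f = (\<Sum>i<N. \<Sum>j<N. f (en i) * (w (en i) * K (en i) (en j)) * f (en j))"
    unfolding kernel_form_def by (simp add: sum.reindex_bij_betw[OF bij, symmetric])
  also have "\<dots> = quad_form N (symmetrized \<Omega> w K) x" unfolding quad_form_def
  proof (intro sum.cong refl)
    fix i j assume "i \<in> {..<N}" "j \<in> {..<N}"
    then have "i < N" "j < N" by auto
    then have "w (en i) = sqrt (w (en i)) * sqrt (w (en i))"
      using w state_enum_in[OF fin] unfolding en_def N_def by (simp add: less_imp_le)
    then show "f (en i) * (w (en i) * K (en i) (en j)) * f (en j) = x i * symmetrized \<Omega> w K i j * x j"
      using sq[OF \<open>i < N\<close>] sq[OF \<open>j < N\<close>] \<open>i < N\<close> \<open>j < N\<close>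
      unfolding f_def symmetrized_def en_def[symmetric] by (simp add: inv field_simps)
  qed
  finally show ?thesis unfolding f_def N_def en_def by simp
qed

lemma sum_sum_if_mem:
  fixes h :: "'s \<Rightarrow> 's \<Rightarrow> real"
  assumes "finite \<Omega>" "U \<subseteq> \<Omega>"
  shows "(\<Sum>s\<in>\<Omega>. \<Sum>t\<in>\<Omega>. if s \<in> U \<and> t \<in> U then h s t else 0) = (\<Sum>s\<in>U. \<Sum>t\<in>U. h s t)"
proof -
  have "(\<Sum>s\<in>\<Omega>. \<Sum>t\<in>\<Omega>. if s \<in> U \<and> t \<in> U then h s t else 0)
      = (\<Sum>s\<in>\<Omega>. if s \<in> U then (\<Sum>t\<in>\<Omega>. if t \<in> U then h s t else 0) else 0)"
    by (intro sum.cong refl) auto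
  also have "\<dots> = (\<Sum>s\<in>U. \<Sum>t\<in>U. h s t)"
    using assms by (simp add: sum.If_cases Int_absorb1 Int_absorb2)
  finally show ?thesis .
qed

lemma kernel_form_sum_if:
  fixes f :: "'s \<Rightarrow> real" and k :: "'a \<Rightarrow> real"
  assumes "finite \<Omega>" "\<And>A. U A \<subseteq> \<Omega>"
    and "\<And>s t. s \<in> \<Omega> \<Longrightarrow> t \<in> \<Omega> \<Longrightarrow>
      w s * K s t = (\<Sum>A\<in>P. if s \<in> U A \<and> t \<in> U A \<and> R A s t then k A else 0)"
  shows "kernel_form \<Omega> w K f = (\<Sum>A\<in>P. k A * (\<Sum>s\<in>U A. \<Sum>t\<in>U A. if R A s t then f s * f t else 0))"
proof -
  have summand: "f s * (if s \<in> U A \<and> t \<in> U A \<and> R A s t then k A else 0) * f t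
      = (if s \<in> U A \<and> t \<in> U A then k A * (if R A s t then f s * f t else 0) else 0)" for s t A
    by simp
  have "kernel_form \<Omega> w K f = (\<Sum>s\<in>\<Omega>. \<Sum>t\<in>\<Omega>. \<Sum>A\<in>P.
      if s \<in> U A \<and> t \<in> U A then k A * (if R A s t then f s * f t else 0) else 0)"
    unfolding kernel_form_def using assms(3)
    by (intro sum.cong refl) (simp add: sum_distrib_left sum_distrib_right summand)
  also have "\<dots> = (\<Sum>A\<in>P. \<Sum>s\<in>\<Omega>. \<Sum>t\<in>\<Omega>.
      if s \<in> U A \<and> t \<in> U A then k A * (if R A s t then f s * f t else 0) else 0)"
    by (subst sum.swap) (rule sum.swap)
  also have "\<dots> = (\<Sum>A\<in>P. k A * (\<Sum>s\<in>U A. \<Sum>t\<in>U A. if R A s t then f s * f t else 0))"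
    using sum_sum_if_mem[OF assms(1,2)] by (simp add: sum_distrib_left)
  finally show ?thesis .
qed

theorem spectral_gap_mono_kernel_form:
  assumes fin: "finite \<Omega>" and card: "card \<Omega> \<ge> 2" and w: "\<forall>s\<in>\<Omega>. w s > 0"
    and P: "reversible \<Omega> w P" and Q: "reversible \<Omega> w Q"
    and form: "\<And>f. 0 \<le> kernel_form \<Omega> w P f \<and> kernel_form \<Omega> w P f \<le> kernel_form \<Omega> w Q f"
  shows "spectral_gap (trans_mat \<Omega> Q) \<le> spectral_gap (trans_mat \<Omega> P)"
  unfolding spectral_gap_symmetrized[OF fin w]
  by (rule spectral_gap_mono_quad_form[OF card sym_matrix_symmetrized[OF fin w P]
        sym_matrix_symmetrized[OF fin w Q]])
     (simp add: quad_form_symmetrized[OF fin w] form)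

lemma sum_squared_le_card_sum_squares:
  fixes g :: "'a \<Rightarrow> real"
  assumes "finite U"
  shows "(\<Sum>s\<in>U. g s)\<^sup>2 \<le> card U * (\<Sum>s\<in>U. (g s)\<^sup>2)"
proof -
  have "0 \<le> (\<Sum>s\<in>U. \<Sum>t\<in>U. (g s - g t)\<^sup>2)" by (intro sum_nonneg) auto
  also have "\<dots> = (\<Sum>s\<in>U. \<Sum>t\<in>U. (g s)\<^sup>2 + (g t)\<^sup>2 - 2 * (g s * g t))"
    by (simp add: power2_eq_square algebra_simps)
  also have "\<dots> = 2 * (card U * (\<Sum>s\<in>U. (g s)\<^sup>2)) - 2 * (\<Sum>s\<in>U. g s)\<^sup>2"
    by (simp add: sum.distrib sum_subtractf sum_distrib_left[symmetric] sum_distrib_right[symmetric]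
        power2_eq_square)
  finally show ?thesis by simp
qed

text \<open>Cauchy--Schwarz for the class sums \<open>g s = \<Sum>t \<sim> s. f t\<close> of an equivalence relation with all
  classes of size \<open>m\<close>: \<open>\<Sum>g = m \<Sum>f\<close> and \<open>\<Sum>g\<^sup>2 = m \<Sum>\<^sub>s\<^sub>\<sim>\<^sub>t f s f t\<close>.\<close>
lemma sum_squared_le_class_form:
  fixes U :: "'a set" and f :: "'a \<Rightarrow> real" and R :: "'a \<Rightarrow> 'a \<Rightarrow> bool"
  assumes fin: "finite U" and m: "m > 0"
    and sym: "\<And>s t. R s t \<Longrightarrow> R t s" and trans: "\<And>s t r. R s t \<Longrightarrow> R t r \<Longrightarrow> R s r"
    and classes: "\<And>t. t \<in> U \<Longrightarrow> card {s\<in>U. R s t} = m"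
    and K: "real (card U) \<le> K"
  shows "(\<Sum>s\<in>U. f s)\<^sup>2 / K \<le> (\<Sum>s\<in>U. \<Sum>t\<in>U. if R s t then f s * f t else 0) / m"
proof -
  define g where "g s = (\<Sum>t\<in>U. if R s t then f t else 0)" for s
  define X where "X = (\<Sum>s\<in>U. \<Sum>t\<in>U. if R s t then f s * f t else 0)"
  have sum_ind: "(\<Sum>s\<in>U. if R s t then c else 0) = c * m" if "t \<in> U" for c :: real and t
    using fin classes[OF that] by (simp add: sum.inter_filter[symmetric])
  have g_eq: "g s = g t" if "R s t" for s t
  proof -
    have "R s x \<longleftrightarrow> R t x" for x using sym[OF that] trans[of t s x] trans[of s t x] that by blast
    then show ?thesis unfolding g_def by simp
  qed
  have sum_g: "(\<Sum>s\<in>U. g s) = m * (\<Sum>t\<in>U. f t)"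
  proof -
    have "(\<Sum>s\<in>U. g s) = (\<Sum>t\<in>U. \<Sum>s\<in>U. if R s t then f t else 0)"
      unfolding g_def by (rule sum.swap)
    also have "\<dots> = (\<Sum>t\<in>U. m * f t)" by (intro sum.cong refl) (simp add: sum_ind)
    finally show ?thesis by (simp add: sum_distrib_left)
  qed
  have sum_g2: "(\<Sum>s\<in>U. (g s)\<^sup>2) = m * X"
  proof -
    have g2: "(g s)\<^sup>2 = (\<Sum>t\<in>U. if R s t then f t * g s else 0)" for s
    proof -
      have "(g s)\<^sup>2 = (\<Sum>t\<in>U. if R s t then f t else 0) * g s"
        unfolding power2_eq_square g_def ..
      also have "\<dots> = (\<Sum>t\<in>U. if R s t then f t * g s else 0)"
        by (simp add: sum_distrib_right if_distrib[of "\<lambda>x. x * _"] cong: if_cong)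
      finally show ?thesis .
    qed
    have "(\<Sum>s\<in>U. (g s)\<^sup>2) = (\<Sum>t\<in>U. \<Sum>s\<in>U. if R s t then f t * g s else 0)"
      unfolding g2 by (rule sum.swap)
    also have "\<dots> = (\<Sum>t\<in>U. \<Sum>s\<in>U. if R s t then f t * g t else 0)"
      using g_eq by (intro sum.cong refl) auto
    also have "\<dots> = (\<Sum>t\<in>U. m * (f t * g t))" by (intro sum.cong refl) (simp add: sum_ind)
    also have "\<dots> = m * X"
      unfolding X_def g_def by (simp add: sum_distrib_left if_distrib[of "\<lambda>x. _ * x"] cong: if_cong)
    finally show ?thesis .
  qed
  have "0 \<le> (\<Sum>s\<in>U. (g s)\<^sup>2)" by (intro sum_nonneg) auto
  hence X: "0 \<le> X" using sum_g2 m by (simp add: zero_le_mult_iff)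
  have "(m * (\<Sum>t\<in>U. f t))\<^sup>2 \<le> card U * (m * X)"
    using sum_squared_le_card_sum_squares[OF fin, of g] sum_g sum_g2 by simp
  hence "m * (m * (\<Sum>t\<in>U. f t)\<^sup>2) \<le> m * (card U * X)" by (simp add: power2_eq_square algebra_simps)
  hence "m * (\<Sum>t\<in>U. f t)\<^sup>2 \<le> card U * X" using m by simp
  also have "\<dots> \<le> K * X" using K X by (rule mult_right_mono)
  finally have bound: "m * (\<Sum>t\<in>U. f t)\<^sup>2 \<le> K * X" .
  show ?thesis
  proof (cases "K > 0")
    case True
    have "(\<Sum>s\<in>U. f s)\<^sup>2 \<le> K * X / m" using bound m by (simp add: pos_le_divide_eq mult.commute)
    thus ?thesis using True unfolding X_def by (simp add: pos_divide_le_eq mult.commute)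
  next
    case False
    hence "(\<Sum>s\<in>U. f s)\<^sup>2 / K \<le> 0" by (simp add: divide_nonneg_nonpos)
    also have "0 \<le> X / m" using X by simp
    finally show ?thesis unfolding X_def .
  qed
qed

section \<open>Swendsen--Wang and isolated-vertices dynamics\<close>

definition edges_in :: "'v set \<Rightarrow> 'v set set \<Rightarrow> bool" where
  "edges_in V E \<longleftrightarrow> (\<forall>e\<in>E. \<exists>u v. e = {u, v} \<and> u \<in> V \<and> v \<in> V)"

definition agree_off_isolated :: "'v set \<Rightarrow> 'v set set \<Rightarrow> ('v \<Rightarrow> nat) \<Rightarrow> ('v \<Rightarrow> nat) \<Rightarrow> bool" where
  "agree_off_isolated V A \<sigma> \<tau> \<longleftrightarrow> (\<forall>v\<in>V. \<not> isolated V A v \<longrightarrow> \<tau> v = \<sigma> v)"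

text \<open>With \<open>1 - p = exp (-\<beta>)\<close>, the Potts measure up to normalisation.\<close>
definition potts_weight :: "real \<Rightarrow> 'v set set \<Rightarrow> ('v \<Rightarrow> nat) \<Rightarrow> real" where
  "potts_weight p E \<sigma> = (1 - p) ^ (card E - card (mono_edges E \<sigma>))"

definition compatible_configs :: "nat \<Rightarrow> 'v set \<Rightarrow> 'v set set \<Rightarrow> 'v set set \<Rightarrow> ('v \<Rightarrow> nat) set" where
  "compatible_configs q V E A = {\<sigma> \<in> configs q V. A \<subseteq> mono_edges E \<sigma>}"

lemma mono_edges_subset: "mono_edges E \<sigma> \<subseteq> E"
  unfolding mono_edges_def by auto

lemma agree_off_isolated_sym: "agree_off_isolated V A \<sigma> \<tau> \<Longrightarrow> agree_off_isolated V A \<tau> \<sigma>"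
  unfolding agree_off_isolated_def by auto

lemma agree_off_isolated_trans:
  "agree_off_isolated V A \<sigma> \<tau> \<Longrightarrow> agree_off_isolated V A \<tau> \<rho> \<Longrightarrow> agree_off_isolated V A \<sigma> \<rho>"
  unfolding agree_off_isolated_def by auto

lemma finite_edges_in:
  assumes "finite V" "edges_in V E"
  shows "finite E"
proof (rule finite_subset)
  show "E \<subseteq> (\<lambda>(u, v). {u, v}) ` (V \<times> V)" using assms(2) unfolding edges_in_def by auto
qed (use assms(1) in simp)

lemma finite_configs:
  assumes "finite V"
  shows "finite (configs q V)"
proof -
  have "configs q V \<subseteq> (\<lambda>g v. if v \<in> V then g v else 0) ` (PiE V (\<lambda>_. {1..q}))"
  proof
    fix \<sigma> assume s: "\<sigma> \<in> configs q V"
    have "\<sigma> = (\<lambda>v. if v \<in> V then restrict \<sigma> V v else 0)"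
      using s unfolding configs_def by (auto intro!: ext)
    moreover have "restrict \<sigma> V \<in> PiE V (\<lambda>_. {1..q})" using s unfolding configs_def by auto
    ultimately show "\<sigma> \<in> (\<lambda>g v. if v \<in> V then g v else 0) ` (PiE V (\<lambda>_. {1..q}))" by blast
  qed
  moreover have "finite (PiE V (\<lambda>_. {1..q}))" using assms by (intro finite_PiE) auto
  ultimately show ?thesis by (rule finite_subset[OF _ finite_imageI])
qed

lemma two_le_card_configs:
  assumes "finite V" "V \<noteq> {}" "q \<ge> 2"
  shows "card (configs q V) \<ge> 2"
proof -
  define s1 where "s1 v = (if v \<in> V then 1 else (0::nat))" for v
  define s2 where "s2 v = (if v \<in> V then 2 else (0::nat))" for v
  obtain v0 where "v0 \<in> V" using assms(2) by blast
  then have "s1 v0 \<noteq> s2 v0" unfolding s1_def s2_def by simp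
  then have "s1 \<noteq> s2" by metis
  then have "card {s1, s2} = 2" by simp
  moreover have "{s1, s2} \<subseteq> configs q V" using assms(3) unfolding configs_def s1_def s2_def by auto
  ultimately show ?thesis using card_mono[OF finite_configs[OF assms(1)], of "{s1, s2}"] by simp
qed

lemma mono_edges_imp_constant_on_components:
  assumes "A \<subseteq> mono_edges E \<tau>" "(u, v) \<in> comp_rel V A"
  shows "\<tau> u = \<tau> v"
proof -
  from assms(2) have "(u, v) \<in> (edge_rel A)\<^sup>*" by (simp add: comp_rel_def)
  thus ?thesis
  proof (induction rule: rtrancl_induct)
    case (step y z)
    have "{y, z} \<in> A" using step(2) by (simp add: edge_rel_def)
    then obtain a b where "{y, z} = {a, b}" "\<tau> a = \<tau> b" using assms(1) unfolding mono_edges_def by blast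
    hence "\<tau> y = \<tau> z" by (auto simp: doubleton_eq_iff)
    with step show ?case by simp
  qed simp
qed

lemma constant_on_components_iff_mono_edges:
  assumes "edges_in V E" "A \<subseteq> E"
  shows "(\<forall>(u, v)\<in>comp_rel V A. \<tau> u = \<tau> v) \<longleftrightarrow> A \<subseteq> mono_edges E \<tau>"
proof
  assume c: "\<forall>(u, v)\<in>comp_rel V A. \<tau> u = \<tau> v"
  show "A \<subseteq> mono_edges E \<tau>"
  proof
    fix e assume e: "e \<in> A"
    have eE: "e \<in> E" using e assms(2) by (rule subsetD[rotated])
    have "\<exists>u v. e = {u, v} \<and> u \<in> V \<and> v \<in> V" using assms(1) eE unfolding edges_in_def by (rule bspec)
    then obtain u v where uv: "e = {u, v}" "u \<in> V" "v \<in> V" by (elim exE conjE)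
    have "(u, v) \<in> edge_rel A" using e uv by (simp add: edge_rel_def)
    hence "(u, v) \<in> comp_rel V A" unfolding comp_rel_def using uv by (simp add: r_into_rtrancl)
    hence "\<tau> u = \<tau> v" using c by blast
    thus "e \<in> mono_edges E \<tau>" using eE uv unfolding mono_edges_def by blast
  qed
next
  assume "A \<subseteq> mono_edges E \<tau>"
  then show "\<forall>(u, v)\<in>comp_rel V A. \<tau> u = \<tau> v"
    using mono_edges_imp_constant_on_components[OF \<open>A \<subseteq> mono_edges E \<tau>\<close>] by blast
qed

lemma mono_edges_agree_off_isolated:
  assumes "edges_in V E" "A \<subseteq> mono_edges E \<sigma>" "agree_off_isolated V A \<sigma> \<tau>"
  shows "A \<subseteq> mono_edges E \<tau>"
proof
  fix e assume e: "e \<in> A"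
  hence eE: "e \<in> E" and ex: "\<exists>a b. e = {a, b} \<and> \<sigma> a = \<sigma> b"
    using assms(2) unfolding mono_edges_def by auto
  have "\<exists>u v. e = {u, v} \<and> u \<in> V \<and> v \<in> V" using assms(1) eE unfolding edges_in_def by (rule bspec)
  then obtain u v where uv: "e = {u, v}" "u \<in> V" "v \<in> V" by (elim exE conjE)
  have "\<sigma> u = \<sigma> v" using ex uv by (auto simp: doubleton_eq_iff)
  moreover have "\<not> isolated V A u" "\<not> isolated V A v" using e uv unfolding isolated_def by auto
  ultimately have "\<tau> u = \<tau> v" using assms(3) uv unfolding agree_off_isolated_def by auto
  thus "e \<in> mono_edges E \<tau>" using eE uv unfolding mono_edges_def by blast
qed

lemma potts_weight_perc_prob:
  assumes "finite E" "A \<subseteq> mono_edges E \<sigma>"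
  shows "potts_weight p E \<sigma> * perc_prob p (mono_edges E \<sigma>) A = perc_prob p E A"
proof -
  have "finite (mono_edges E \<sigma>)" using assms(1) mono_edges_subset by (rule finite_subset[rotated])
  then have "card A \<le> card (mono_edges E \<sigma>)" "card (mono_edges E \<sigma>) \<le> card E"
    using assms card_mono mono_edges_subset by blast+
  then have "card E - card (mono_edges E \<sigma>) + (card (mono_edges E \<sigma>) - card A) = card E - card A"
    by simp
  then show ?thesis unfolding potts_weight_def perc_prob_def
    by (simp add: power_add[symmetric] algebra_simps)
qed

lemma sum_Pow_mono_edges:
  assumes "finite E"
  shows "(\<Sum>A\<in>Pow (mono_edges E \<sigma>). g A) = (\<Sum>A\<in>Pow E. if A \<subseteq> mono_edges E \<sigma> then g A else 0)"
proof -
  have "Pow (mono_edges E \<sigma>) = {A \<in> Pow E. A \<subseteq> mono_edges E \<sigma>}" using mono_edges_subset by blast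
  then show ?thesis using sum.inter_filter[of "Pow E" g "\<lambda>A. A \<subseteq> mono_edges E \<sigma>"] assms by simp
qed

lemma potts_weight_SW_kernel:
  assumes "finite E" "edges_in V E"
  shows "potts_weight p E \<sigma> * SW_kernel q p V E \<sigma> \<tau> =
    (\<Sum>A\<in>Pow E. if A \<subseteq> mono_edges E \<sigma> \<and> A \<subseteq> mono_edges E \<tau> \<and> \<tau> \<in> configs q V
       then perc_prob p E A / real q ^ card (V // comp_rel V A) else 0)"
proof -
  have "potts_weight p E \<sigma> * SW_kernel q p V E \<sigma> \<tau> =
     (\<Sum>A\<in>Pow (mono_edges E \<sigma>). if A \<subseteq> mono_edges E \<tau> \<and> \<tau> \<in> configs q V
       then perc_prob p E A / real q ^ card (V // comp_rel V A) else 0)"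
    unfolding SW_kernel_def sum_distrib_left
  proof (intro sum.cong refl)
    fix A assume A: "A \<in> Pow (mono_edges E \<sigma>)"
    then have "A \<subseteq> E" using mono_edges_subset by blast
    then show "potts_weight p E \<sigma> * (perc_prob p (mono_edges E \<sigma>) A *
        (if \<tau> \<in> configs q V \<and> (\<forall>(u, v)\<in>comp_rel V A. \<tau> u = \<tau> v)
         then 1 / real q ^ card (V // comp_rel V A) else 0)) =
      (if A \<subseteq> mono_edges E \<tau> \<and> \<tau> \<in> configs q V
       then perc_prob p E A / real q ^ card (V // comp_rel V A) else 0)"
      using potts_weight_perc_prob[OF assms(1), of A \<sigma> p] A
      unfolding constant_on_components_iff_mono_edges[OF assms(2) \<open>A \<subseteq> E\<close>] mult.assoc[symmetric]
      by simp
  qed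
  then show ?thesis by (simp add: sum_Pow_mono_edges[OF assms(1)] if_if_eq_conj conj_ac)
qed

lemma potts_weight_ISW_kernel:
  assumes "finite E"
  shows "potts_weight p E \<sigma> * ISW_kernel q p V E \<sigma> \<tau> =
    (\<Sum>A\<in>Pow E. if A \<subseteq> mono_edges E \<sigma> \<and> \<tau> \<in> configs q V \<and> agree_off_isolated V A \<sigma> \<tau>
       then perc_prob p E A / real q ^ card {v \<in> V. isolated V A v} else 0)"
proof -
  have "potts_weight p E \<sigma> * ISW_kernel q p V E \<sigma> \<tau> =
     (\<Sum>A\<in>Pow (mono_edges E \<sigma>). if \<tau> \<in> configs q V \<and> agree_off_isolated V A \<sigma> \<tau>
       then perc_prob p E A / real q ^ card {v \<in> V. isolated V A v} else 0)"
    unfolding ISW_kernel_def sum_distrib_left agree_off_isolated_def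
    using potts_weight_perc_prob[OF assms(1), of _ \<sigma> p]
    by (intro sum.cong refl) (auto simp: mult.assoc[symmetric])
  then show ?thesis by (simp add: sum_Pow_mono_edges[OF assms(1)] if_if_eq_conj conj_ac)
qed

lemma reversible_SW_kernel:
  assumes "finite E" "edges_in V E"
  shows "reversible (configs q V) (potts_weight p E) (SW_kernel q p V E)"
  unfolding reversible_def potts_weight_SW_kernel[OF assms] by (auto intro!: sum.cong)

lemma reversible_ISW_kernel:
  assumes "finite E" "edges_in V E"
  shows "reversible (configs q V) (potts_weight p E) (ISW_kernel q p V E)"
  unfolding reversible_def potts_weight_ISW_kernel[OF assms(1)]
proof (intro ballI sum.cong refl)
  fix \<sigma> \<tau> A assume "\<sigma> \<in> configs q V" "\<tau> \<in> configs q V"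
  then have "(A \<subseteq> mono_edges E \<sigma> \<and> \<tau> \<in> configs q V \<and> agree_off_isolated V A \<sigma> \<tau>) \<longleftrightarrow>
      (A \<subseteq> mono_edges E \<tau> \<and> \<sigma> \<in> configs q V \<and> agree_off_isolated V A \<tau> \<sigma>)"
    using agree_off_isolated_sym mono_edges_agree_off_isolated[OF assms(2)] by blast
  then show "(if A \<subseteq> mono_edges E \<sigma> \<and> \<tau> \<in> configs q V \<and> agree_off_isolated V A \<sigma> \<tau>
        then perc_prob p E A / real q ^ card {v \<in> V. isolated V A v} else 0) =
      (if A \<subseteq> mono_edges E \<tau> \<and> \<sigma> \<in> configs q V \<and> agree_off_isolated V A \<tau> \<sigma>
        then perc_prob p E A / real q ^ card {v \<in> V. isolated V A v} else 0)"
    by simp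
qed

lemma card_agree_off_isolated:
  assumes "finite V" and \<tau>: "\<tau> \<in> configs q V"
  shows "card {\<sigma> \<in> configs q V. agree_off_isolated V A \<sigma> \<tau>} = q ^ card {v \<in> V. isolated V A v}"
proof -
  define I where "I = {v \<in> V. isolated V A v}"
  have "bij_betw (\<lambda>\<sigma>. restrict \<sigma> I) {\<sigma> \<in> configs q V. agree_off_isolated V A \<sigma> \<tau>} (PiE I (\<lambda>_. {1..q}))"
  proof (rule bij_betw_byWitness[where f' = "\<lambda>g v. if v \<in> I then g v else \<tau> v"])
    show "\<forall>\<sigma>\<in>{\<sigma> \<in> configs q V. agree_off_isolated V A \<sigma> \<tau>}. (\<lambda>v. if v \<in> I then restrict \<sigma> I v else \<tau> v) = \<sigma>"
    proof (intro ballI ext)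
      fix \<sigma> v assume "\<sigma> \<in> {\<sigma> \<in> configs q V. agree_off_isolated V A \<sigma> \<tau>}"
      then show "(if v \<in> I then restrict \<sigma> I v else \<tau> v) = \<sigma> v"
        using \<tau> unfolding configs_def agree_off_isolated_def I_def by (cases "v \<in> V") auto
    qed
    show "\<forall>g\<in>PiE I (\<lambda>_. {1..q}). restrict (\<lambda>v. if v \<in> I then g v else \<tau> v) I = g"
      by (auto intro!: ext simp: PiE_def extensional_def)
    show "(\<lambda>\<sigma>. restrict \<sigma> I) ` {\<sigma> \<in> configs q V. agree_off_isolated V A \<sigma> \<tau>} \<subseteq> PiE I (\<lambda>_. {1..q})"
      by (rule image_subsetI, rule restrict_PiE_iff[THEN iffD2]) (auto simp: configs_def I_def)
    show "(\<lambda>g v. if v \<in> I then g v else \<tau> v) ` PiE I (\<lambda>_. {1..q})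
        \<subseteq> {\<sigma> \<in> configs q V. agree_off_isolated V A \<sigma> \<tau>}"
      using \<tau> unfolding configs_def agree_off_isolated_def I_def by (auto simp: PiE_def Pi_def)
  qed
  then have "card {\<sigma> \<in> configs q V. agree_off_isolated V A \<sigma> \<tau>} = card (PiE I (\<lambda>_. {1..q}))"
    by (rule bij_betw_same_card)
  also have "\<dots> = q ^ card I" using assms(1) by (simp add: card_PiE I_def)
  finally show ?thesis unfolding I_def .
qed

lemma image_component_compatible:
  assumes "\<sigma> \<in> compatible_configs q V E A" "v \<in> V"
  shows "\<sigma> ` (comp_rel V A `` {v}) = {\<sigma> v}"
proof -
  have mono: "A \<subseteq> mono_edges E \<sigma>" using assms(1) unfolding compatible_configs_def by simp
  have "v \<in> comp_rel V A `` {v}" using assms(2) unfolding comp_rel_def by simp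
  moreover have "\<forall>u\<in>comp_rel V A `` {v}. \<sigma> u = \<sigma> v"
    using mono_edges_imp_constant_on_components[OF mono] by auto
  ultimately show ?thesis by blast
qed

text \<open>By the previous lemma a compatible configuration is determined by its values on the clusters.\<close>
lemma card_compatible_configs_le:
  assumes "finite V"
  shows "card (compatible_configs q V E A) \<le> q ^ card (V // comp_rel V A)"
proof -
  define R where "R = comp_rel V A"
  define U where "U = compatible_configs q V E A"
  define h where "h \<sigma> = restrict (\<lambda>C. the_elem (\<sigma> ` C)) (V // R)" for \<sigma> :: "'a \<Rightarrow> nat"
  have class_image: "\<sigma> ` (R `` {v}) = {\<sigma> v}" if "\<sigma> \<in> U" "v \<in> V" for \<sigma> v
    using image_component_compatible[OF that[unfolded U_def]] unfolding R_def .
  have "inj_on h U"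
  proof (rule inj_onI)
    fix \<sigma> \<sigma>' assume s: "\<sigma> \<in> U" "\<sigma>' \<in> U" and hh: "h \<sigma> = h \<sigma>'"
    show "\<sigma> = \<sigma>'"
    proof
      fix v show "\<sigma> v = \<sigma>' v"
      proof (cases "v \<in> V")
        case True
        then have "R `` {v} \<in> V // R" by (rule quotientI)
        moreover have "h \<sigma> (R `` {v}) = h \<sigma>' (R `` {v})" using hh by simp
        ultimately have "the_elem (\<sigma> ` (R `` {v})) = the_elem (\<sigma>' ` (R `` {v}))"
          unfolding h_def by simp
        then show ?thesis using class_image s True by simp
      qed (use s in \<open>auto simp: U_def compatible_configs_def configs_def\<close>)
    qed
  qed
  moreover have "h ` U \<subseteq> PiE (V // R) (\<lambda>_. {1..q})"
  proof (rule image_subsetI)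
    fix \<sigma> assume "\<sigma> \<in> U"
    have "the_elem (\<sigma> ` C) \<in> {1..q}" if "C \<in> V // R" for C
    proof -
      from that obtain y where "y \<in> V" "C = R `` {y}" by (rule quotientE)
      then show ?thesis using class_image[OF \<open>\<sigma> \<in> U\<close>] \<open>\<sigma> \<in> U\<close>
        unfolding U_def compatible_configs_def configs_def by auto
    qed
    then show "h \<sigma> \<in> PiE (V // R) (\<lambda>_. {1..q})" unfolding h_def by auto
  qed
  moreover have "finite (V // R)"
    using assms by (rule finite_quotient) (auto simp: R_def comp_rel_def)
  ultimately have "card U \<le> card (PiE (V // R) (\<lambda>_. {1..q}))"
    by (intro card_inj_on_le) (auto intro: finite_PiE)
  also have "\<dots> = q ^ card (V // R)" using \<open>finite (V // R)\<close> by (simp add: card_PiE)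
  finally show ?thesis unfolding U_def R_def .
qed

lemma cluster_form_le_agree_form:
  fixes A :: "'v set set" and f :: "('v \<Rightarrow> nat) \<Rightarrow> real"
  assumes "finite V" "edges_in V E" "q > 0"
  defines "C \<equiv> compatible_configs q V E A"
  shows "(\<Sum>\<sigma>\<in>C. f \<sigma>)\<^sup>2 / real q ^ card (V // comp_rel V A)
    \<le> (\<Sum>\<sigma>\<in>C. \<Sum>\<tau>\<in>C. if agree_off_isolated V A \<sigma> \<tau> then f \<sigma> * f \<tau> else 0)
        / real q ^ card {v \<in> V. isolated V A v}"
proof -
  have fin: "finite C" using finite_configs[OF assms(1)] unfolding C_def compatible_configs_def by simp
  have classes: "card {\<sigma> \<in> C. agree_off_isolated V A \<sigma> \<tau>} = q ^ card {v \<in> V. isolated V A v}"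
    if "\<tau> \<in> C" for \<tau>
  proof -
    have "A \<subseteq> mono_edges E \<sigma>" if "agree_off_isolated V A \<sigma> \<tau>" for \<sigma>
      using mono_edges_agree_off_isolated[OF assms(2) _ agree_off_isolated_sym[OF that]] \<open>\<tau> \<in> C\<close>
      unfolding C_def compatible_configs_def by simp
    then have "{\<sigma> \<in> C. agree_off_isolated V A \<sigma> \<tau>} = {\<sigma> \<in> configs q V. agree_off_isolated V A \<sigma> \<tau>}"
      unfolding C_def compatible_configs_def by auto
    then show ?thesis
      using card_agree_off_isolated[OF assms(1)] that unfolding C_def compatible_configs_def by simp
  qed
  have "real (card C) \<le> real (q ^ card (V // comp_rel V A))"
    using card_compatible_configs_le[OF assms(1)] unfolding C_def of_nat_le_iff .
  moreover have "q ^ card {v \<in> V. isolated V A v} > 0" using assms(3) by simp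
  ultimately have "(\<Sum>\<sigma>\<in>C. f \<sigma>)\<^sup>2 / real (q ^ card (V // comp_rel V A))
    \<le> (\<Sum>\<sigma>\<in>C. \<Sum>\<tau>\<in>C. if agree_off_isolated V A \<sigma> \<tau> then f \<sigma> * f \<tau> else 0)
        / real (q ^ card {v \<in> V. isolated V A v})"
    by (intro sum_squared_le_class_form[where R = "agree_off_isolated V A", OF fin _ _ _ classes])
       (auto intro: agree_off_isolated_sym agree_off_isolated_trans)
  then show ?thesis by simp
qed

lemma kernel_form_SW_kernel:
  assumes "finite V" "edges_in V E"
  shows "kernel_form (configs q V) (potts_weight p E) (SW_kernel q p V E) f
    = (\<Sum>A\<in>Pow E. perc_prob p E A / real q ^ card (V // comp_rel V A)
        * (\<Sum>\<sigma>\<in>compatible_configs q V E A. f \<sigma>)\<^sup>2)"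
  unfolding power2_eq_square sum_product
  by (rule kernel_form_sum_if[OF finite_configs[OF assms(1)], where R = "\<lambda>_ _ _. True", simplified])
     (auto simp: potts_weight_SW_kernel[OF finite_edges_in[OF assms] assms(2)] compatible_configs_def conj_ac)

lemma kernel_form_ISW_kernel:
  assumes "finite V" "edges_in V E"
  shows "kernel_form (configs q V) (potts_weight p E) (ISW_kernel q p V E) f
    = (\<Sum>A\<in>Pow E. perc_prob p E A / real q ^ card {v \<in> V. isolated V A v}
        * (\<Sum>\<sigma>\<in>compatible_configs q V E A. \<Sum>\<tau>\<in>compatible_configs q V E A.
             if agree_off_isolated V A \<sigma> \<tau> then f \<sigma> * f \<tau> else 0))"
proof (rule kernel_form_sum_if[OF finite_configs[OF assms(1)]])
  fix \<sigma> \<tau> assume "\<sigma> \<in> configs q V" "\<tau> \<in> configs q V"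
  then have "(A \<subseteq> mono_edges E \<sigma> \<and> \<tau> \<in> configs q V \<and> agree_off_isolated V A \<sigma> \<tau>)
      \<longleftrightarrow> (\<sigma> \<in> compatible_configs q V E A \<and> \<tau> \<in> compatible_configs q V E A
          \<and> agree_off_isolated V A \<sigma> \<tau>)" for A
    using mono_edges_agree_off_isolated[OF assms(2)] unfolding compatible_configs_def by blast
  then show "potts_weight p E \<sigma> * ISW_kernel q p V E \<sigma> \<tau> = (\<Sum>A\<in>Pow E.
      if \<sigma> \<in> compatible_configs q V E A \<and> \<tau> \<in> compatible_configs q V E A \<and> agree_off_isolated V A \<sigma> \<tau>
      then perc_prob p E A / real q ^ card {v \<in> V. isolated V A v} else 0)"
    unfolding potts_weight_ISW_kernel[OF finite_edges_in[OF assms]] by simp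
qed (auto simp: compatible_configs_def)

theorem spectral_gap_ISW_le_SW:
  fixes V :: "'v set" and E :: "'v set set"
  assumes V: "finite V" "V \<noteq> {}" and E: "edges_in V E" and q: "q \<ge> 2" and p: "0 \<le> p" "p < 1"
  shows "spectral_gap (trans_mat (configs q V) (ISW_kernel q p V E))
       \<le> spectral_gap (trans_mat (configs q V) (SW_kernel q p V E))"
proof (rule spectral_gap_mono_kernel_form[OF finite_configs[OF V(1)] two_le_card_configs[OF V q]
      _ reversible_SW_kernel[OF finite_edges_in[OF V(1) E] E]
      reversible_ISW_kernel[OF finite_edges_in[OF V(1) E] E]])
  show "\<forall>\<sigma>\<in>configs q V. potts_weight p E \<sigma> > 0" using p unfolding potts_weight_def by simp
  have perc: "0 \<le> perc_prob p E A" for A using p unfolding perc_prob_def by simp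
  fix f
  have "perc_prob p E A / real q ^ card (V // comp_rel V A) * (\<Sum>\<sigma>\<in>compatible_configs q V E A. f \<sigma>)\<^sup>2
    \<le> perc_prob p E A / real q ^ card {v \<in> V. isolated V A v}
        * (\<Sum>\<sigma>\<in>compatible_configs q V E A. \<Sum>\<tau>\<in>compatible_configs q V E A.
             if agree_off_isolated V A \<sigma> \<tau> then f \<sigma> * f \<tau> else 0)" for A
    using mult_left_mono[OF cluster_form_le_agree_form[OF V(1) E, where q = q and A = A and f = f] perc] q
    by (simp add: field_simps)
  then show "0 \<le> kernel_form (configs q V) (potts_weight p E) (SW_kernel q p V E) f
    \<and> kernel_form (configs q V) (potts_weight p E) (SW_kernel q p V E) f
      \<le> kernel_form (configs q V) (potts_weight p E) (ISW_kernel q p V E) f"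
    unfolding kernel_form_SW_kernel[OF V(1) E] kernel_form_ISW_kernel[OF V(1) E]
    using perc by (auto intro!: sum_nonneg sum_mono)
qed

lemma finite_cube: "finite (cube d a L)"
proof -
  define B where "B = (\<Union>i<d. {a i..<a i + int L})"
  have "cube d a L \<subseteq> {xs. set xs \<subseteq> B \<and> length xs = d}"
  proof
    fix x assume "x \<in> cube d a L"
    hence len: "length x = d" and bd: "\<forall>i<d. a i \<le> x ! i \<and> x ! i < a i + int L"
      unfolding cube_def by auto
    have "set x \<subseteq> B"
    proof
      fix y assume "y \<in> set x"
      then obtain i where "i < length x" "x ! i = y" by (auto simp: in_set_conv_nth)
      thus "y \<in> B" using bd len unfolding B_def by force
    qed
    thus "x \<in> {xs. set xs \<subseteq> B \<and> length xs = d}" using len by simp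
  qed
  moreover have "finite B" unfolding B_def by simp
  ultimately show ?thesis using finite_lists_length_eq finite_subset by blast
qed

lemma cube_nonempty: "L \<ge> 1 \<Longrightarrow> cube d a L \<noteq> {}"
proof -
  assume "L \<ge> 1"
  then have "map a [0..<d] \<in> cube d a L" unfolding cube_def by auto
  then show ?thesis by blast
qed

lemma edges_in_induced_edges: "edges_in V (induced_edges d V)"
  unfolding edges_in_def induced_edges_def by blast

theorem mainTheorem8:
  fixes q d L :: nat and a :: "nat \<Rightarrow> int" and \<beta> :: real
  assumes "q \<ge> 2" and "\<beta> > 0" and "d \<ge> 1" and "L \<ge> 1"
  defines "V \<equiv> cube d a L"
  defines "E \<equiv> induced_edges d V"
  defines "p \<equiv> 1 - exp (- \<beta>)"
  shows "spectral_gap (trans_mat (configs q V) (SW_kernel q p V E))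
         \<ge> spectral_gap (trans_mat (configs q V) (ISW_kernel q p V E))"
proof -
  have "0 \<le> p" "p < 1" unfolding p_def using \<open>\<beta> > 0\<close> by simp_all
  then show ?thesis
    using spectral_gap_ISW_le_SW[OF finite_cube cube_nonempty[OF \<open>L \<ge> 1\<close>] edges_in_induced_edges \<open>q \<ge> 2\<close>]
    unfolding V_def E_def by simp
qed

end
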